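(* Let $\sigma(x,y)=(x\rightharpoonup y,x\leftharpoonup y)$ be an involutive non-degenerate quiver-theoretic Yang--Baxter map on a quiver $\mathscr{A}$ over $\Lambda$, and let $\mathscr{C}=\mathscr{C}(\sigma)$ be its structure category. Then $\mathscr{C}$ is left-Ore and any two elements of $\mathscr{C}$ with the same target admit a left-lcm. Consequently the canonical functor $\mathscr{C}\to\mathrm{Env}(\mathscr{C})$ is injective, and every element of $\mathscr{C}\mathscr{C}^{-1}\subseteq\mathrm{Env}(\mathscr{C})$ admits a symmetric normal decomposition (in the sense of Dehornoy et al., Foundations of Garside theory, Ch. III) with respect to the Garside structure of $\mathscr{C}$.
   Context: A quiver over $\Lambda$ has source/target maps $\mathfrak{s},\mathfrak{t}$; $\mathscr{A}\otimes\mathscr{A}$ is the quiver of composable pairs $x|y$ ($\mathfrak{t}(x)=\mathfrak{s}(y)$). A quiver-theoretic Yang--Baxter map is a source/target-preserving map $\sigma\colon\mathscr{A}\otimes\mathscr{A}\to\mathscr{A}\otimes\mathscr{A}$ satisfying the braid relation $(\sigma\otimes\mathrm{id})(\mathrm{id}\otimes\sigma)(\sigma\otimes\mathrm{id})=(\mathrm{id}\otimes\sigma)(\sigma\otimes\mathrm{id})(\mathrm{id}\otimes\sigma)$; involutive means $\sigma^2=\mathrm{id}$; non-degenerate means all maps $x\rightharpoonup\cdot\colon\mathscr{A}(\mathfrak{t}(x),\Lambda)\to\mathscr{A}(\mathfrak{s}(x),\Lambda)$ and $\cdot\leftharpoonup y\colon\mathscr{A}(\Lambda,\mathfrak{s}(y))\to\mathscr{A}(\Lambda,\mathfrak{t}(y))$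 are bijective. $\mathscr{C}(\sigma)$ is the category presented by generators $\mathscr{A}$ and relations $x|y\sim(x\rightharpoonup y)|(x\leftharpoonup y)$. A category is left-Ore if it is (left- and right-) cancellative and any two elements with the same target have a common left-multiple $ux=vy$. A left-lcm of $x,y$ is a common left-multiple right-dividing every common left-multiple. $\mathrm{Env}(\mathscr{C})$ is the enveloping groupoid: the groupoid with a functor $\iota\colon\mathscr{C}\to\mathrm{Env}(\mathscr{C})$ through which every functor from $\mathscr{C}$ to a groupoid factors uniquely. *)

theory Defs
  imports Main
begin

text \<open>Composition convention of Dehornoy et al.: cmp f g is "f then g", defined when
  tgt f = src g.\<close>

record ('o, 'm) category =
  ob  :: "'o set"
  mor :: "'m set"
  src :: "'m \<Rightarrow> 'o"
  tgt :: "'m \<Rightarrow> 'o"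
  cmp :: "'m \<Rightarrow> 'm \<Rightarrow> 'm"
  idm :: "'o \<Rightarrow> 'm"

definition left_divides :: "('o,'m) category \<Rightarrow> 'm \<Rightarrow> 'm \<Rightarrow> bool" where
  "left_divides C f g \<longleftrightarrow> f \<in> mor C \<and> g \<in> mor C \<and>
     (\<exists>h\<in>mor C. src C h = tgt C f \<and> cmp C f h = g)"

definition right_divides :: "('o,'m) category \<Rightarrow> 'm \<Rightarrow> 'm \<Rightarrow> bool" where
  "right_divides C f g \<longleftrightarrow> f \<in> mor C \<and> g \<in> mor C \<and>
     (\<exists>u\<in>mor C. tgt C u = src C f \<and> cmp C u f = g)"

definition left_cancellative :: "('o,'m) category \<Rightarrow> bool" where
  "left_cancellative C \<longleftrightarrow> (\<forall>f\<in>mor C. \<forall>g\<in>mor C. \<forall>g'\<in>mor C.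
     src C g = tgt C f \<longrightarrow> src C g' = tgt C f \<longrightarrow> cmp C f g = cmp C f g' \<longrightarrow> g = g')"

definition right_cancellative :: "('o,'m) category \<Rightarrow> bool" where
  "right_cancellative C \<longleftrightarrow> (\<forall>f\<in>mor C. \<forall>f'\<in>mor C. \<forall>g\<in>mor C.
     tgt C f = src C g \<longrightarrow> tgt C f' = src C g \<longrightarrow> cmp C f g = cmp C f' g \<longrightarrow> f = f')"

definition left_ore :: "('o,'m) category \<Rightarrow> bool" where
  "left_ore C \<longleftrightarrow> left_cancellative C \<and> right_cancellative C \<and>
     (\<forall>x\<in>mor C. \<forall>y\<in>mor C. tgt C x = tgt C y \<longrightarrow>
        (\<exists>u\<in>mor C. \<exists>v\<in>mor C. tgt C u = src C x \<and> tgt C v = src C y \<and>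
            cmp C u x = cmp C v y))"

definition is_left_lcm :: "('o,'m) category \<Rightarrow> 'm \<Rightarrow> 'm \<Rightarrow> 'm \<Rightarrow> bool" where
  "is_left_lcm C f g h \<longleftrightarrow> right_divides C f h \<and> right_divides C g h \<and>
     (\<forall>h'\<in>mor C. right_divides C f h' \<longrightarrow> right_divides C g h' \<longrightarrow> right_divides C h h')"

definition invertible :: "('o,'m) category \<Rightarrow> 'm \<Rightarrow> bool" where
  "invertible C f \<longleftrightarrow> f \<in> mor C \<and> (\<exists>g\<in>mor C. src C g = tgt C f \<and> tgt C g = src C f \<and>
      cmp C f g = idm C (src C f) \<and> cmp C g f = idm C (tgt C f))"

definition sharp :: "('o,'m) category \<Rightarrow> 'm set \<Rightarrow> 'm set" where
  "sharp C S = {cmp C s e | s e. s \<in> S \<and> invertible C e \<and> tgt C s = src C e}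
              \<union> {e. invertible C e}"

definition greedy :: "('o,'m) category \<Rightarrow> 'm set \<Rightarrow> 'm \<Rightarrow> 'm \<Rightarrow> bool" where
  "greedy C S g1 g2 \<longleftrightarrow> (\<forall>s\<in>S. \<forall>f\<in>mor C. tgt C f = src C g1 \<longrightarrow>
       left_divides C s (cmp C f (cmp C g1 g2)) \<longrightarrow> left_divides C s (cmp C f g1))"

fun composable_list :: "('o,'m) category \<Rightarrow> 'm list \<Rightarrow> bool" where
  "composable_list C [] = True"
| "composable_list C [f] = (f \<in> mor C)"
| "composable_list C (f # g # xs) =
     (f \<in> mor C \<and> tgt C f = src C g \<and> composable_list C (g # xs))"

fun greedy_list :: "('o,'m) category \<Rightarrow> 'm set \<Rightarrow> 'm list \<Rightarrow> bool" where
  "greedy_list C S [] = True"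
| "greedy_list C S [f] = True"
| "greedy_list C S (f # g # xs) = (greedy C S f g \<and> greedy_list C S (g # xs))"

fun prod_list_cat :: "('o,'m) category \<Rightarrow> 'm list \<Rightarrow> 'm" where
  "prod_list_cat C [] = undefined"
| "prod_list_cat C [f] = f"
| "prod_list_cat C (f # g # xs) = cmp C f (prod_list_cat C (g # xs))"

definition normal_path :: "('o,'m) category \<Rightarrow> 'm set \<Rightarrow> 'm list \<Rightarrow> bool" where
  "normal_path C S xs \<longleftrightarrow> xs \<noteq> [] \<and> set xs \<subseteq> sharp C S \<and> composable_list C xs
     \<and> greedy_list C S xs"

definition garside_family :: "('o,'m) category \<Rightarrow> 'm set \<Rightarrow> bool" where
  "garside_family C S \<longleftrightarrow> S \<subseteq> mor C \<and>
     (\<forall>g\<in>mor C. \<exists>xs. normal_path C S xs \<and> prod_list_cat C xs = g)"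

definition left_disjoint :: "('o,'m) category \<Rightarrow> 'm \<Rightarrow> 'm \<Rightarrow> bool" where
  "left_disjoint C f g \<longleftrightarrow> f \<in> mor C \<and> g \<in> mor C \<and> src C f = src C g \<and>
     (\<forall>h\<in>mor C. \<forall>h'\<in>mor C. tgt C h' = src C f \<longrightarrow>
        left_divides C h (cmp C h' f) \<longrightarrow> left_divides C h (cmp C h' g) \<longrightarrow>
        left_divides C h h')"

text \<open>Env(C) is presented by generators C \<union> C-bar (letter (f,True) = f, (f,False) = f^{-1})
  and relations f|g = fg, f|f^{-1} = 1, f^{-1}|f = 1, 1_x = empty word.
  An element is the class of a pair (x, w) of a starting object and a valid word.\<close>

definition letter_src :: "('o,'m) category \<Rightarrow> 'm \<times> bool \<Rightarrow> 'o" where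
  "letter_src C l = (if snd l then src C (fst l) else tgt C (fst l))"

definition letter_tgt :: "('o,'m) category \<Rightarrow> 'm \<times> bool \<Rightarrow> 'o" where
  "letter_tgt C l = (if snd l then tgt C (fst l) else src C (fst l))"

fun env_walk :: "('o,'m) category \<Rightarrow> 'o \<Rightarrow> ('m \<times> bool) list \<Rightarrow> bool" where
  "env_walk C x [] = (x \<in> ob C)"
| "env_walk C x (l # w) = (fst l \<in> mor C \<and> letter_src C l = x \<and> env_walk C (letter_tgt C l) w)"

inductive env_step :: "('o,'m) category \<Rightarrow> 'o \<times> ('m \<times> bool) list \<Rightarrow> 'o \<times> ('m \<times> bool) list \<Rightarrow> bool"
  for C where
  comp: "env_walk C x (u @ [(f,True),(g,True)] @ v) \<Longrightarrow> env_walk C x (u @ [(cmp C f g,True)] @ v)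
     \<Longrightarrow> env_step C (x, u @ [(f,True),(g,True)] @ v) (x, u @ [(cmp C f g,True)] @ v)"
| inv1: "env_walk C x (u @ [(f,True),(f,False)] @ v) \<Longrightarrow> env_walk C x (u @ v)
     \<Longrightarrow> env_step C (x, u @ [(f,True),(f,False)] @ v) (x, u @ v)"
| inv2: "env_walk C x (u @ [(f,False),(f,True)] @ v) \<Longrightarrow> env_walk C x (u @ v)
     \<Longrightarrow> env_step C (x, u @ [(f,False),(f,True)] @ v) (x, u @ v)"
| ident: "env_walk C x (u @ [(idm C y,True)] @ v) \<Longrightarrow> env_walk C x (u @ v)
     \<Longrightarrow> env_step C (x, u @ [(idm C y,True)] @ v) (x, u @ v)"

definition env_eq :: "('o,'m) category \<Rightarrow> 'o \<times> ('m \<times> bool) list \<Rightarrow> 'o \<times> ('m \<times> bool) list \<Rightarrow> bool" where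
  "env_eq C = (\<lambda>p q. env_step C p q \<or> env_step C q p)\<^sup>*\<^sup>*"

definition env_class :: "('o,'m) category \<Rightarrow> 'o \<times> ('m \<times> bool) list \<Rightarrow> ('o \<times> ('m \<times> bool) list) set" where
  "env_class C p = {q. env_eq C p q}"

definition env_iota :: "('o,'m) category \<Rightarrow> 'm \<Rightarrow> ('o \<times> ('m \<times> bool) list) set" where
  "env_iota C f = env_class C (src C f, [(f,True)])"

text \<open>gamma admits a symmetric S-normal decomposition t_q|..|t_1 | s_1|..|s_p:
  t_1|..|t_q and s_1|..|s_p S-normal, t_1 and s_1 left-disjoint, and
  gamma = t_q^{-1} .. t_1^{-1} s_1 .. s_p.  (Empty sides are represented by padding with
  an identity, which is always possible.)\<close>
definition has_sym_normal_decomp ::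
  "('o,'m) category \<Rightarrow> 'm set \<Rightarrow> ('o \<times> ('m \<times> bool) list) set \<Rightarrow> bool" where
  "has_sym_normal_decomp C S \<gamma> \<longleftrightarrow> (\<exists>ts ss. normal_path C S ts \<and> normal_path C S ss \<and>
      left_disjoint C (hd ts) (hd ss) \<and>
      \<gamma> = env_class C (tgt C (last ts), map (\<lambda>t. (t, False)) (rev ts) @ map (\<lambda>s. (s, True)) ss))"

definition is_quiver :: "'v set \<Rightarrow> 'a set \<Rightarrow> ('a \<Rightarrow> 'v) \<Rightarrow> ('a \<Rightarrow> 'v) \<Rightarrow> bool" where
  "is_quiver Lam A s t \<longleftrightarrow> (\<forall>x\<in>A. s x \<in> Lam \<and> t x \<in> Lam)"

definition composable :: "'a set \<Rightarrow> ('a \<Rightarrow> 'v) \<Rightarrow> ('a \<Rightarrow> 'v) \<Rightarrow> 'a \<Rightarrow> 'a \<Rightarrow> bool" where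
  "composable A s t x y \<longleftrightarrow> x \<in> A \<and> y \<in> A \<and> t x = s y"

definition lact :: "('a \<times> 'a \<Rightarrow> 'a \<times> 'a) \<Rightarrow> 'a \<Rightarrow> 'a \<Rightarrow> 'a" where
  "lact \<sigma> x y = fst (\<sigma> (x, y))"

definition ract :: "('a \<times> 'a \<Rightarrow> 'a \<times> 'a) \<Rightarrow> 'a \<Rightarrow> 'a \<Rightarrow> 'a" where
  "ract \<sigma> x y = snd (\<sigma> (x, y))"

definition quiver_map :: "'a set \<Rightarrow> ('a \<Rightarrow> 'v) \<Rightarrow> ('a \<Rightarrow> 'v) \<Rightarrow> ('a \<times> 'a \<Rightarrow> 'a \<times> 'a) \<Rightarrow> bool" where
  "quiver_map A s t \<sigma> \<longleftrightarrow> (\<forall>x y. composable A s t x y \<longrightarrow>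
      composable A s t (lact \<sigma> x y) (ract \<sigma> x y) \<and>
      s (lact \<sigma> x y) = s x \<and> t (ract \<sigma> x y) = t y)"

definition sigma12 :: "('a \<times> 'a \<Rightarrow> 'a \<times> 'a) \<Rightarrow> 'a \<times> 'a \<times> 'a \<Rightarrow> 'a \<times> 'a \<times> 'a" where
  "sigma12 \<sigma> T = (case T of (x, y, z) \<Rightarrow> (fst (\<sigma> (x, y)), snd (\<sigma> (x, y)), z))"

definition sigma23 :: "('a \<times> 'a \<Rightarrow> 'a \<times> 'a) \<Rightarrow> 'a \<times> 'a \<times> 'a \<Rightarrow> 'a \<times> 'a \<times> 'a" where
  "sigma23 \<sigma> T = (case T of (x, y, z) \<Rightarrow> (x, fst (\<sigma> (y, z)), snd (\<sigma> (y, z))))"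

definition yang_baxter_map :: "'v set \<Rightarrow> 'a set \<Rightarrow> ('a \<Rightarrow> 'v) \<Rightarrow> ('a \<Rightarrow> 'v) \<Rightarrow> ('a \<times> 'a \<Rightarrow> 'a \<times> 'a) \<Rightarrow> bool" where
  "yang_baxter_map Lam A s t \<sigma> \<longleftrightarrow> is_quiver Lam A s t \<and> quiver_map A s t \<sigma> \<and>
     (\<forall>x y z. composable A s t x y \<longrightarrow> composable A s t y z \<longrightarrow>
        sigma12 \<sigma> (sigma23 \<sigma> (sigma12 \<sigma> (x, y, z))) = sigma23 \<sigma> (sigma12 \<sigma> (sigma23 \<sigma> (x, y, z))))"

definition involutive_qmap :: "'a set \<Rightarrow> ('a \<Rightarrow> 'v) \<Rightarrow> ('a \<Rightarrow> 'v) \<Rightarrow> ('a \<times> 'a \<Rightarrow> 'a \<times> 'a) \<Rightarrow> bool" where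
  "involutive_qmap A s t \<sigma> \<longleftrightarrow> (\<forall>x y. composable A s t x y \<longrightarrow> \<sigma> (\<sigma> (x, y)) = (x, y))"

definition nondegenerate :: "'a set \<Rightarrow> ('a \<Rightarrow> 'v) \<Rightarrow> ('a \<Rightarrow> 'v) \<Rightarrow> ('a \<times> 'a \<Rightarrow> 'a \<times> 'a) \<Rightarrow> bool" where
  "nondegenerate A s t \<sigma> \<longleftrightarrow>
     (\<forall>x\<in>A. bij_betw (\<lambda>y. lact \<sigma> x y) {y\<in>A. s y = t x} {y\<in>A. s y = s x}) \<and>
     (\<forall>y\<in>A. bij_betw (\<lambda>x. ract \<sigma> x y) {x\<in>A. t x = s y} {x\<in>A. t x = t y})"

text \<open>Paths of the free category: a starting vertex together with a list of consecutive arrows.\<close>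
fun arrow_path :: "'a set \<Rightarrow> ('a \<Rightarrow> 'v) \<Rightarrow> ('a \<Rightarrow> 'v) \<Rightarrow> 'a list \<Rightarrow> bool" where
  "arrow_path A s t [] = True"
| "arrow_path A s t [x] = (x \<in> A)"
| "arrow_path A s t (x # y # xs) = (composable A s t x y \<and> arrow_path A s t (y # xs))"

definition valid_path :: "'v set \<Rightarrow> 'a set \<Rightarrow> ('a \<Rightarrow> 'v) \<Rightarrow> ('a \<Rightarrow> 'v) \<Rightarrow> 'v \<times> 'a list \<Rightarrow> bool" where
  "valid_path Lam A s t p \<longleftrightarrow> fst p \<in> Lam \<and> arrow_path A s t (snd p) \<and>
     (snd p \<noteq> [] \<longrightarrow> s (hd (snd p)) = fst p)"

definition path_tgt :: "('a \<Rightarrow> 'v) \<Rightarrow> 'v \<times> 'a list \<Rightarrow> 'v" where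
  "path_tgt t p = (if snd p = [] then fst p else t (last (snd p)))"

inductive sc_step :: "'v set \<Rightarrow> 'a set \<Rightarrow> ('a \<Rightarrow> 'v) \<Rightarrow> ('a \<Rightarrow> 'v) \<Rightarrow> ('a \<times> 'a \<Rightarrow> 'a \<times> 'a)
    \<Rightarrow> 'v \<times> 'a list \<Rightarrow> 'v \<times> 'a list \<Rightarrow> bool"
  for Lam A s t \<sigma> where
  "valid_path Lam A s t (v, us @ [x, y] @ ws) \<Longrightarrow>
   sc_step Lam A s t \<sigma> (v, us @ [x, y] @ ws) (v, us @ [lact \<sigma> x y, ract \<sigma> x y] @ ws)"

definition sc_eq :: "'v set \<Rightarrow> 'a set \<Rightarrow> ('a \<Rightarrow> 'v) \<Rightarrow> ('a \<Rightarrow> 'v) \<Rightarrow> ('a \<times> 'a \<Rightarrow> 'a \<times> 'a)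
    \<Rightarrow> 'v \<times> 'a list \<Rightarrow> 'v \<times> 'a list \<Rightarrow> bool" where
  "sc_eq Lam A s t \<sigma> = (\<lambda>p q. sc_step Lam A s t \<sigma> p q \<or> sc_step Lam A s t \<sigma> q p)\<^sup>*\<^sup>*"

definition sc_class :: "'v set \<Rightarrow> 'a set \<Rightarrow> ('a \<Rightarrow> 'v) \<Rightarrow> ('a \<Rightarrow> 'v) \<Rightarrow> ('a \<times> 'a \<Rightarrow> 'a \<times> 'a)
    \<Rightarrow> 'v \<times> 'a list \<Rightarrow> ('v \<times> 'a list) set" where
  "sc_class Lam A s t \<sigma> p = {q. sc_eq Lam A s t \<sigma> p q}"

definition structure_category :: "'v set \<Rightarrow> 'a set \<Rightarrow> ('a \<Rightarrow> 'v) \<Rightarrow> ('a \<Rightarrow> 'v)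
    \<Rightarrow> ('a \<times> 'a \<Rightarrow> 'a \<times> 'a) \<Rightarrow> ('v, ('v \<times> 'a list) set) category" where
  "structure_category Lam A s t \<sigma> =
     \<lparr> ob = Lam,
       mor = sc_class Lam A s t \<sigma> ` {p. valid_path Lam A s t p},
       src = (\<lambda>M. fst (SOME p. p \<in> M)),
       tgt = (\<lambda>M. path_tgt t (SOME p. p \<in> M)),
       cmp = (\<lambda>M N. sc_class Lam A s t \<sigma>
                (fst (SOME p. p \<in> M), snd (SOME p. p \<in> M) @ snd (SOME q. q \<in> N))),
       idm = (\<lambda>v. sc_class Lam A s t \<sigma> (v, [])) \<rparr>"

end

theory Submission
  imports Defs "HOL-Library.Multiset"
begin

text \<open>A path \<open>x\<^sub>1 \<cdots> x\<^sub>n\<close> determines the multiset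
  \<open>\<Phi> = {#x\<^sub>1, x\<^sub>1 \<rightharpoonup> x\<^sub>2, x\<^sub>1 \<rightharpoonup> (x\<^sub>2 \<rightharpoonup> x\<^sub>3), \<dots>#}\<close> of arrows out of its source and the bijection
  \<open>\<lambda> = (x\<^sub>1 \<rightharpoonup> \<cdot>) \<circ> \<cdots> \<circ> (x\<^sub>n \<rightharpoonup> \<cdot>)\<close>.  The braid relation makes both constant on
  \<open>\<sigma>\<close>-classes, and involutivity together with non-degeneracy makes \<open>\<Phi>\<close> a bijection between the
  morphisms of \<open>C(\<sigma>)\<close> with source \<open>v\<close> and the finite multisets of arrows out of \<open>v\<close>.  As
  \<open>\<Phi>(f g) = \<Phi>(f) + \<lambda>\<^sub>f(\<Phi>(g))\<close>, this gives left cancellativity; the same invariant for the mirror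
  solution on the opposite quiver gives right cancellativity, and turns right divisibility into
  multiset inclusion, so that left-lcms come from unions of multisets.

  Letting \<open>f\<close> act on \<open>\<int>\<close>-valued functions on arrows by \<open>n \<mapsto> \<Phi>(f) + n \<circ> \<lambda>\<^sub>f\<inverse>\<close> gives a functor
  to a groupoid that separates morphisms, so \<open>\<iota>\<close> is injective.  Finally, if \<open>u f = v g\<close> is a
  left-lcm, then \<open>u\<close> and \<open>v\<close> are left-disjoint and \<open>f g\<inverse> = u\<inverse> v\<close> in \<open>Env(C)\<close>, so normal
  decompositions of \<open>u\<close> and \<open>v\<close> give a symmetric normal decomposition of \<open>f g\<inverse>\<close>.\<close>

lemma image_mset_inv_into_image_mset:
  assumes "inj_on f X" "set_mset M \<subseteq> X"
  shows "image_mset (inv_into X f) (image_mset f M) = M"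
proof -
  have "image_mset (inv_into X f) (image_mset f M) = image_mset (inv_into X f \<circ> f) M"
    by (simp add: multiset.map_comp)
  also have "\<dots> = image_mset id M"
    by (rule image_mset_cong) (use assms in auto)
  finally show ?thesis by simp
qed

lemma image_mset_inj_on_eq:
  assumes "inj_on f X" "set_mset M \<subseteq> X" "set_mset N \<subseteq> X" "image_mset f M = image_mset f N"
  shows "M = N"
  by (metis assms image_mset_inv_into_image_mset)

lemma image_mset_inj_on_subseteq:
  assumes "inj_on f X" "set_mset M \<subseteq> X" "set_mset N \<subseteq> X" "image_mset f M \<subseteq># image_mset f N"
  shows "M \<subseteq># N"
  by (metis assms image_mset_inv_into_image_mset image_mset_subseteq_mono)

lemma count_image_mset_inj_on:
  assumes "inj_on f X" "set_mset M \<subseteq> X" "b \<in> X"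
  shows "count (image_mset f M) (f b) = count M b"
proof -
  have "f -` {f b} \<inter> set_mset M = (if b \<in># M then {b} else {})"
    using assms by (auto dest: inj_onD)
  then show ?thesis by (simp add: count_image_mset not_in_iff)
qed

lemma arrow_path_Cons_in: "arrow_path A s t (a # w) \<Longrightarrow> a \<in> A"
  by (cases w) (auto simp: composable_def)

lemma arrow_path_Cons:
  "arrow_path A s t (x # w) \<longleftrightarrow> x \<in> A \<and> arrow_path A s t w \<and> (w \<noteq> [] \<longrightarrow> t x = s (hd w))"
  by (cases w) (auto simp: composable_def dest: arrow_path_Cons_in)

lemma arrow_path_append:
  "arrow_path A s t (u @ v) \<longleftrightarrow> arrow_path A s t u \<and> arrow_path A s t v \<and>
     (u \<noteq> [] \<longrightarrow> v \<noteq> [] \<longrightarrow> t (last u) = s (hd v))"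
  by (induction u) (auto simp: arrow_path_Cons)

lemma arrow_path_rev: "arrow_path A t s (rev w) \<longleftrightarrow> arrow_path A s t w"
  by (induction w) (auto simp: arrow_path_append arrow_path_Cons hd_rev last_rev)

lemma arrow_path_last_in: "arrow_path A s t w \<Longrightarrow> w \<noteq> [] \<Longrightarrow> last w \<in> A"
  by (induction w) (auto simp: arrow_path_Cons)

section \<open>Small categories\<close>

lemma composable_list_Cons:
  "composable_list C (f # xs) \<longleftrightarrow>
     f \<in> mor C \<and> composable_list C xs \<and> (xs \<noteq> [] \<longrightarrow> tgt C f = src C (hd xs))"
  by (cases xs) auto

lemma prod_list_cat_Cons: "xs \<noteq> [] \<Longrightarrow> prod_list_cat C (f # xs) = cmp C f (prod_list_cat C xs)"
  by (cases xs) auto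

text \<open>The presentation of \<open>Env(C)\<close> lets the identity letter \<open>idm C x\<close> occur for any \<open>x\<close> for
  which it is a morphism; the last axiom rules out junk identities outside \<open>ob C\<close>.\<close>

locale small_category =
  fixes C :: "('o, 'm) category"
  assumes src_in_ob: "f \<in> mor C \<Longrightarrow> src C f \<in> ob C"
    and tgt_in_ob: "f \<in> mor C \<Longrightarrow> tgt C f \<in> ob C"
    and cmp_closed: "\<lbrakk>f \<in> mor C; g \<in> mor C; tgt C f = src C g\<rbrakk> \<Longrightarrow>
      cmp C f g \<in> mor C \<and> src C (cmp C f g) = src C f \<and> tgt C (cmp C f g) = tgt C g"
    and cmp_assoc: "\<lbrakk>f \<in> mor C; g \<in> mor C; h \<in> mor C; tgt C f = src C g; tgt C g = src C h\<rbrakk> \<Longrightarrow>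
      cmp C (cmp C f g) h = cmp C f (cmp C g h)"
    and idm_closed: "x \<in> ob C \<Longrightarrow> idm C x \<in> mor C \<and> src C (idm C x) = x \<and> tgt C (idm C x) = x"
    and cmp_idm_left: "f \<in> mor C \<Longrightarrow> cmp C (idm C (src C f)) f = f"
    and cmp_idm_right: "f \<in> mor C \<Longrightarrow> cmp C f (idm C (tgt C f)) = f"
    and idm_in_mor_imp_ob: "idm C x \<in> mor C \<Longrightarrow> x \<in> ob C"
begin

lemma right_divides_tgt: "right_divides C f h \<Longrightarrow> tgt C h = tgt C f"
  unfolding right_divides_def using cmp_closed by force

lemma left_divides_cmp_left:
  assumes "left_divides C a b" "h \<in> mor C" "tgt C h = src C a"
  shows "left_divides C (cmp C h a) (cmp C h b)"
proof -
  obtain r where r: "a \<in> mor C" "b \<in> mor C" "r \<in> mor C" "src C r = tgt C a" "cmp C a r = b"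
    using assms(1) unfolding left_divides_def by blast
  have "src C b = src C a" using cmp_closed[OF r(1) r(3) r(4)[symmetric]] r by simp
  have "cmp C (cmp C h a) r = cmp C h b"
    using cmp_assoc[OF assms(2) r(1) r(3) assms(3) r(4)[symmetric]] r by simp
  moreover have "cmp C h a \<in> mor C" "tgt C (cmp C h a) = tgt C a"
    using cmp_closed[OF assms(2) r(1) assms(3)] by auto
  moreover have "cmp C h b \<in> mor C"
    using cmp_closed[OF assms(2) r(2)] assms(3) \<open>src C b = src C a\<close> by simp
  ultimately show ?thesis unfolding left_divides_def using r by auto
qed

lemma left_divides_trans:
  assumes "left_divides C h x" "left_divides C x y"
  shows "left_divides C h y"
proof -
  obtain a where a: "h \<in> mor C" "x \<in> mor C" "a \<in> mor C" "src C a = tgt C h" "cmp C h a = x"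
    using assms(1) unfolding left_divides_def by blast
  obtain b where b: "y \<in> mor C" "b \<in> mor C" "src C b = tgt C x" "cmp C x b = y"
    using assms(2) unfolding left_divides_def by blast
  have ta: "tgt C x = tgt C a" using cmp_closed[OF a(1) a(3) a(4)[symmetric]] a by simp
  have "cmp C h (cmp C a b) = y" using cmp_assoc[OF a(1) a(3) b(2) a(4)[symmetric]] ta b a by simp
  moreover have "cmp C a b \<in> mor C \<and> src C (cmp C a b) = src C a"
    using cmp_closed[OF a(3) b(2)] ta b by simp
  ultimately show ?thesis unfolding left_divides_def using a b by auto
qed

lemma prod_list_cat_closed:
  "composable_list C xs \<Longrightarrow> xs \<noteq> [] \<Longrightarrow> prod_list_cat C xs \<in> mor C \<and>
     src C (prod_list_cat C xs) = src C (hd xs) \<and> tgt C (prod_list_cat C xs) = tgt C (last xs)"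
proof (induction xs)
  case (Cons f xs)
  then show ?case
    using cmp_closed[of f "prod_list_cat C xs"]
    by (cases "xs = []") (auto simp: composable_list_Cons prod_list_cat_Cons)
qed simp

lemma left_divides_hd_prod_list_cat:
  assumes "composable_list C xs" "xs \<noteq> []"
  shows "left_divides C (hd xs) (prod_list_cat C xs)"
proof (cases xs)
  case (Cons f ys)
  then have f: "f \<in> mor C" using assms by (simp add: composable_list_Cons)
  show ?thesis
  proof (cases "ys = []")
    case True
    then show ?thesis using Cons cmp_idm_right[OF f] idm_closed[OF tgt_in_ob[OF f]] f
      unfolding left_divides_def by auto
  next
    case False
    have ys: "tgt C f = src C (hd ys)" "composable_list C ys"
      using assms Cons False by (auto simp: composable_list_Cons)
    then show ?thesis
      using Cons f False prod_list_cat_closed[OF ys(2) False] prod_list_cat_closed[OF assms]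
      unfolding left_divides_def by (auto simp: prod_list_cat_Cons)
  qed
qed (use assms in simp)

lemma left_disjoint_left_divisors:
  assumes disj: "left_disjoint C u v" and a: "left_divides C a u" and b: "left_divides C b v"
  shows "left_disjoint C a b"
proof -
  have src: "src C a = src C u" "src C b = src C v"
    using a b cmp_closed unfolding left_divides_def by force+
  show ?thesis
    unfolding left_disjoint_def
  proof (intro conjI ballI impI)
    show "a \<in> mor C" "b \<in> mor C" using a b unfolding left_divides_def by auto
    show "src C a = src C b" using src disj unfolding left_disjoint_def by simp
  next
    fix h h' assume h: "h \<in> mor C" "h' \<in> mor C" "tgt C h' = src C a"
      and ha: "left_divides C h (cmp C h' a)" and hb: "left_divides C h (cmp C h' b)"
    have "left_divides C h (cmp C h' u)"
      using left_divides_trans[OF ha left_divides_cmp_left[OF a h(2) h(3)]] .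
    moreover have "left_divides C h (cmp C h' v)"
      using left_divides_trans[OF hb left_divides_cmp_left[OF b h(2)]] h(3) src disj
      unfolding left_disjoint_def by simp
    ultimately show "left_divides C h h'"
      using disj h src unfolding left_disjoint_def by auto
  qed
qed

lemma left_lcm_complements_left_disjoint:
  assumes lc: "left_cancellative C" and rc: "right_cancellative C"
    and lcm: "is_left_lcm C f g H" and f: "f \<in> mor C" and g: "g \<in> mor C"
    and u: "u \<in> mor C" "tgt C u = src C f" "cmp C u f = H"
    and v: "v \<in> mor C" "tgt C v = src C g" "cmp C v g = H"
  shows "left_disjoint C u v"
proof -
  have Hu: "H \<in> mor C" "src C H = src C u" "tgt C H = tgt C f"
    using cmp_closed[OF u(1) f u(2)] u(3) by auto
  have Hv: "src C H = src C v" "tgt C H = tgt C g" using cmp_closed[OF v(1) g v(2)] v(3) by auto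
  have "left_divides C h h'"
    if h: "h \<in> mor C" "h' \<in> mor C" "tgt C h' = src C u"
      and hu: "left_divides C h (cmp C h' u)" and hv: "left_divides C h (cmp C h' v)" for h h'
  proof -
    have h'v: "tgt C h' = src C v" using h Hu Hv by simp
    obtain a where a: "a \<in> mor C" "src C a = tgt C h" "cmp C h a = cmp C h' u"
      using hu unfolding left_divides_def by blast
    obtain b where b: "b \<in> mor C" "src C b = tgt C h" "cmp C h b = cmp C h' v"
      using hv unfolding left_divides_def by blast
    have ta: "tgt C a = src C f"
      using cmp_closed[OF h(1) a(1) a(2)[symmetric]] cmp_closed[OF h(2) u(1) h(3)] a u by simp
    have tb: "tgt C b = src C g"
      using cmp_closed[OF h(1) b(1) b(2)[symmetric]] cmp_closed[OF h(2) v(1) h'v] b v by simp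
    have af: "cmp C a f \<in> mor C" "src C (cmp C a f) = tgt C h"
      using cmp_closed[OF a(1) f ta] a by auto
    have bg: "cmp C b g \<in> mor C" "src C (cmp C b g) = tgt C h"
      using cmp_closed[OF b(1) g tb] b by auto
    have "cmp C h (cmp C a f) = cmp C (cmp C h a) f"
      using cmp_assoc[OF h(1) a(1) f a(2)[symmetric] ta] by simp
    also have "\<dots> = cmp C h' H" using a(3) cmp_assoc[OF h(2) u(1) f h(3) u(2)] u(3) by simp
    also have "\<dots> = cmp C (cmp C h b) g" using b(3) cmp_assoc[OF h(2) v(1) g h'v v(2)] v(3) by simp
    also have "\<dots> = cmp C h (cmp C b g)" using cmp_assoc[OF h(1) b(1) g b(2)[symmetric] tb] by simp
    finally have "cmp C a f = cmp C b g"
      using lc h(1) af bg unfolding left_cancellative_def by metis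
    then have "right_divides C f (cmp C a f)" "right_divides C g (cmp C a f)"
      unfolding right_divides_def using a b f g af ta tb by auto
    then have "right_divides C H (cmp C a f)" using lcm af unfolding is_left_lcm_def by blast
    then obtain w where w: "w \<in> mor C" "tgt C w = src C H" "cmp C w H = cmp C a f"
      unfolding right_divides_def by blast
    have wu: "cmp C w u \<in> mor C" "tgt C (cmp C w u) = src C f" "src C (cmp C w u) = src C w"
      using cmp_closed[OF w(1) u(1)] w(2) Hu u by auto
    have "cmp C (cmp C w u) f = cmp C a f" using cmp_assoc[OF w(1) u(1) f] w Hu u by simp
    then have wua: "cmp C w u = a"
      using rc wu a(1) f ta unfolding right_cancellative_def by metis
    have sw: "src C w = tgt C h" using wu(3) wua a(2) by simp
    have hw: "cmp C h w \<in> mor C" "tgt C (cmp C h w) = src C u"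
      using cmp_closed[OF h(1) w(1) sw[symmetric]] w Hu by auto
    have "cmp C (cmp C h w) u = cmp C h' u"
      using cmp_assoc[OF h(1) w(1) u(1) sw[symmetric]] w Hu wua a(3) by simp
    then have "cmp C h w = h'" using rc hw h u(1) unfolding right_cancellative_def by metis
    then show "left_divides C h h'" unfolding left_divides_def using h w sw by auto
  qed
  then show ?thesis unfolding left_disjoint_def using u v Hu Hv by auto
qed

end

section \<open>Words in the enveloping groupoid\<close>

abbreviation pos_word :: "'m list \<Rightarrow> ('m \<times> bool) list" where
  "pos_word xs \<equiv> map (\<lambda>t. (t, True)) xs"

abbreviation inv_word :: "'m list \<Rightarrow> ('m \<times> bool) list" where
  "inv_word xs \<equiv> map (\<lambda>t. (t, False)) (rev xs)"

fun walk_end :: "('o, 'm) category \<Rightarrow> 'o \<Rightarrow> ('m \<times> bool) list \<Rightarrow> 'o" where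
  "walk_end C x [] = x"
| "walk_end C x (l # w) = walk_end C (letter_tgt C l) w"

lemma walk_end_append: "walk_end C x (u @ v) = walk_end C (walk_end C x u) v"
  by (induction u arbitrary: x) auto

lemma env_eq_symclp: "env_eq C = (symclp (env_step C))\<^sup>*\<^sup>*"
  by (simp add: env_eq_def symclp_def[abs_def])

lemma env_eq_refl: "env_eq C p p"
  by (simp add: env_eq_def)

lemma env_eq_sym: "env_eq C p q \<Longrightarrow> env_eq C q p"
  by (simp add: env_eq_symclp sympD[OF symp_rtranclp_symclp])

lemma env_eq_trans: "env_eq C p q \<Longrightarrow> env_eq C q r \<Longrightarrow> env_eq C p r"
  unfolding env_eq_def by (rule rtranclp_trans)

lemma env_step_imp_env_eq: "env_step C p q \<Longrightarrow> env_eq C p q"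
  unfolding env_eq_def by auto

lemma env_class_eq: "env_eq C p q \<Longrightarrow> env_class C p = env_class C q"
  unfolding env_class_def using env_eq_sym env_eq_trans by blast

context small_category
begin

lemma env_walk_start_in_ob: "env_walk C x w \<Longrightarrow> x \<in> ob C"
  by (cases w) (auto simp: letter_src_def src_in_ob tgt_in_ob split: if_splits)

lemma env_walk_append:
  "env_walk C x (u @ v) \<longleftrightarrow> env_walk C x u \<and> env_walk C (walk_end C x u) v"
  by (induction u arbitrary: x) (auto dest: env_walk_start_in_ob)

lemma env_walk_positive:
  "composable_list C xs \<Longrightarrow> xs \<noteq> [] \<Longrightarrow>
   env_walk C y (pos_word xs @ post) \<longleftrightarrow>
     y = src C (hd xs) \<and> env_walk C (tgt C (last xs)) post"
proof (induction xs arbitrary: y)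
  case (Cons f xs)
  then show ?case
    by (cases "xs = []") (auto simp: letter_src_def letter_tgt_def composable_list_Cons)
qed simp

lemma env_walk_negative:
  "composable_list C xs \<Longrightarrow> xs \<noteq> [] \<Longrightarrow>
   env_walk C y (inv_word xs @ post) \<longleftrightarrow>
     y = tgt C (last xs) \<and> env_walk C (src C (hd xs)) post"
proof (induction xs arbitrary: post)
  case (Cons f xs)
  show ?case
  proof (cases "xs = []")
    case True then show ?thesis using Cons by (auto simp: letter_src_def letter_tgt_def)
  next
    case False
    have xs: "composable_list C xs" "f \<in> mor C" "tgt C f = src C (hd xs)"
      using Cons False by (auto simp: composable_list_Cons)
    have "env_walk C y (inv_word (f # xs) @ post) \<longleftrightarrow>
          env_walk C y (inv_word xs @ ((f, False) # post))" by simp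
    also have "\<dots> \<longleftrightarrow> y = tgt C (last xs) \<and> env_walk C (src C (hd xs)) ((f, False) # post)"
      using Cons.IH[OF xs(1) False] .
    finally show ?thesis using xs False by (auto simp: letter_src_def letter_tgt_def)
  qed
qed simp

lemma env_eq_prod_list_cat:
  assumes "composable_list C xs" "xs \<noteq> []"
    and "env_walk C x (pre @ [(prod_list_cat C xs, True)] @ post)"
  shows "env_eq C (x, pre @ pos_word xs @ post) (x, pre @ [(prod_list_cat C xs, True)] @ post)"
  using assms
proof (induction xs arbitrary: pre)
  case (Cons f xs)
  show ?case
  proof (cases "xs = []")
    case True then show ?thesis by (simp add: env_eq_refl)
  next
    case False
    define P where "P = prod_list_cat C xs"
    have xs: "composable_list C xs" "f \<in> mor C" "tgt C f = src C (hd xs)"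
      using Cons False by (auto simp: composable_list_Cons)
    have P: "P \<in> mor C" "src C P = tgt C f" "tgt C P = tgt C (last xs)"
      using prod_list_cat_closed[OF xs(1) False] xs P_def by auto
    have fP: "src C (cmp C f P) = src C f" "tgt C (cmp C f P) = tgt C P"
      using cmp_closed[OF xs(2) P(1)] P by auto
    have prod: "prod_list_cat C (f # xs) = cmp C f P"
      using False P_def by (simp add: prod_list_cat_Cons)
    from Cons.prems(3)
    have "env_walk C x pre" "src C f = walk_end C x pre" "env_walk C (tgt C P) post"
      using prod fP by (auto simp: env_walk_append letter_src_def letter_tgt_def)
    then have walk: "env_walk C x (pre @ [(f, True), (P, True)] @ post)"
      using xs P by (simp add: env_walk_append letter_src_def letter_tgt_def)
    then have "env_walk C x ((pre @ [(f, True)]) @ [(P, True)] @ post)"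
      by simp
    then have "env_eq C (x, (pre @ [(f, True)]) @ pos_word xs @ post)
        (x, (pre @ [(f, True)]) @ [(P, True)] @ post)"
      using Cons.IH[OF xs(1) False] P_def by blast
    moreover have "env_step C (x, pre @ [(f, True), (P, True)] @ post)
        (x, pre @ [(cmp C f P, True)] @ post)"
      using walk Cons.prems(3) prod by (intro env_step.comp) auto
    ultimately show ?thesis using prod env_eq_trans env_step_imp_env_eq by fastforce
  qed
qed simp

lemma env_eq_cancel_inverse_path:
  assumes "composable_list C xs" "xs \<noteq> []" "env_walk C x (pre @ post)"
    and "walk_end C x pre = tgt C (last xs)"
  shows "env_eq C (x, pre @ inv_word xs @ pos_word xs @ post) (x, pre @ post)"
  using assms
proof (induction xs)
  case (Cons f r)
  have walk: "env_walk C x pre" "env_walk C (walk_end C x pre) post"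
    using Cons.prems(3) by (auto simp: env_walk_append)
  have "env_walk C (src C (hd (f # r))) (pos_word (f # r) @ post)"
    using env_walk_positive[OF Cons.prems(1,2)] walk Cons.prems(4) by simp
  then have "env_walk C (walk_end C x pre)
      (inv_word (f # r) @ (pos_word (f # r) @ post))"
    using env_walk_negative[OF Cons.prems(1,2)] Cons.prems(4) by simp
  then have walk_fr: "env_walk C x (pre @ inv_word (f # r) @ pos_word (f # r) @ post)"
    using walk(1) env_walk_append by simp
  show ?case
  proof (cases "r = []")
    case True
    have "env_step C (x, pre @ [(f, False), (f, True)] @ post) (x, pre @ post)"
      using walk_fr True Cons.prems(3) by (intro env_step.inv2) auto
    then show ?thesis using True env_step_imp_env_eq by fastforce
  next
    case False
    have r: "composable_list C r" using Cons by (simp add: composable_list_Cons)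
    have "env_walk C (src C (hd r)) (pos_word r @ post)"
      using env_walk_positive[OF r False] walk Cons.prems(4) False by simp
    then have "env_walk C (walk_end C x pre) (inv_word r @ (pos_word r @ post))"
      using env_walk_negative[OF r False] Cons.prems(4) False by simp
    then have walk_r: "env_walk C x (pre @ inv_word r @ pos_word r @ post)"
      using walk(1) env_walk_append by simp
    have "env_step C (x, (pre @ inv_word r) @ [(f, False), (f, True)] @ (pos_word r @ post))
        (x, (pre @ inv_word r) @ (pos_word r @ post))"
      using walk_fr walk_r by (intro env_step.inv2) auto
    then have "env_eq C (x, pre @ inv_word (f # r) @ pos_word (f # r) @ post)
        (x, pre @ inv_word r @ pos_word r @ post)"
      using env_step_imp_env_eq by fastforce
    moreover have "env_eq C (x, pre @ inv_word r @ pos_word r @ post) (x, pre @ post)"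
      using Cons.IH[OF r False Cons.prems(3)] Cons.prems(4) False by simp
    ultimately show ?thesis using env_eq_trans by blast
  qed
qed simp

lemma env_class_right_fraction_eq_left_fraction:
  assumes f: "f \<in> mor C" and g: "g \<in> mor C" and fg: "tgt C f = tgt C g"
    and u: "u \<in> mor C" "tgt C u = src C f" and v: "v \<in> mor C" "tgt C v = src C g"
    and uv: "cmp C u f = cmp C v g" and suv: "src C u = src C v"
    and ts: "composable_list C ts" "ts \<noteq> []" "prod_list_cat C ts = u"
    and ss: "composable_list C ss" "ss \<noteq> []" "prod_list_cat C ss = v"
  shows "env_class C (src C f, [(f, True), (g, False)]) =
    env_class C (tgt C (last ts), inv_word ts @ pos_word ss)"
proof -
  define x where "x = src C f"
  define N where "N = inv_word ts"
  define H where "H = cmp C u f"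
  have pu: "src C u = src C (hd ts)" "tgt C u = tgt C (last ts)"
    using prod_list_cat_closed[OF ts(1,2)] ts(3) by auto
  have H: "H \<in> mor C" "H = cmp C v g" using cmp_closed[OF u(1) f u(2)] uv H_def by auto
  have tx: "tgt C (last ts) = x" using pu u x_def by simp
  have ob: "tgt C f \<in> ob C" "src C g \<in> ob C" "tgt C v \<in> ob C"
    using tgt_in_ob src_in_ob f g v(1) by auto
  have walkN: "env_walk C x (N @ post) \<longleftrightarrow> env_walk C (src C u) post" for post
    using env_walk_negative[OF ts(1,2), of x post] tx pu by (simp add: N_def)
  txt \<open>Read backwards: \<open>u\<inverse> v = u\<inverse> v g g\<inverse> = u\<inverse> u f g\<inverse> = f g\<inverse>\<close>.\<close>
  have "env_walk C x (N @ [(prod_list_cat C ss, True)] @ [])"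
    using walkN ss v suv ob by (simp add: letter_src_def letter_tgt_def)
  from env_eq_prod_list_cat[OF ss(1,2) this]
  have e1: "env_eq C (x, N @ pos_word ss) (x, N @ [(v, True)])"
    using ss(3) by simp
  have "env_step C (x, (N @ [(v, True)]) @ [(g, True), (g, False)] @ [])
      (x, (N @ [(v, True)]) @ [])"
    using walkN v g suv ob by (intro env_step.inv1) (simp_all add: letter_src_def letter_tgt_def)
  then have e2: "env_eq C (x, N @ [(v, True)]) (x, N @ [(v, True), (g, True), (g, False)])"
    using env_step_imp_env_eq env_eq_sym by fastforce
  have "env_step C (x, N @ [(v, True), (g, True)] @ [(g, False)])
      (x, N @ [(cmp C v g, True)] @ [(g, False)])"
    using walkN v g suv ob H cmp_closed[OF v(1) g v(2)]
    by (intro env_step.comp) (simp_all add: letter_src_def letter_tgt_def)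
  then have e3: "env_eq C (x, N @ [(v, True), (g, True), (g, False)])
      (x, N @ [(H, True), (g, False)])"
    using env_step_imp_env_eq H by fastforce
  have "env_step C (x, N @ [(u, True), (f, True)] @ [(g, False)])
      (x, N @ [(cmp C u f, True)] @ [(g, False)])"
    using walkN u f g fg ob H cmp_closed[OF u(1) f u(2)]
    by (intro env_step.comp) (simp_all add: letter_src_def letter_tgt_def H_def)
  then have e4: "env_eq C (x, N @ [(H, True), (g, False)])
      (x, N @ [(u, True), (f, True), (g, False)])"
    using env_step_imp_env_eq env_eq_sym H_def by fastforce
  have "env_walk C x (N @ [(prod_list_cat C ts, True)] @ [(f, True), (g, False)])"
    using walkN u f g fg ob ts by (simp add: letter_src_def letter_tgt_def)
  from env_eq_sym[OF env_eq_prod_list_cat[OF ts(1,2) this]]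
  have e5: "env_eq C (x, N @ [(u, True), (f, True), (g, False)])
      (x, N @ pos_word ts @ [(f, True), (g, False)])"
    using ts(3) by simp
  have "env_walk C x ([] @ [(f, True), (g, False)])"
    using f g fg ob x_def by (simp add: letter_src_def letter_tgt_def)
  from env_eq_cancel_inverse_path[OF ts(1,2) this]
  have e6: "env_eq C (x, N @ pos_word ts @ [(f, True), (g, False)]) (x, [(f, True), (g, False)])"
    using tx by (simp add: N_def)
  have "env_eq C (x, N @ pos_word ss) (x, [(f, True), (g, False)])"
    using e1 e2 e3 e4 e5 e6 env_eq_trans by meson
  then show ?thesis
    using env_class_eq tx x_def by (metis N_def)
qed

theorem sym_normal_decomp_of_left_lcm:
  assumes lc: "left_cancellative C" and rc: "right_cancellative C" and S: "garside_family C S"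
    and f: "f \<in> mor C" and g: "g \<in> mor C" and fg: "tgt C f = tgt C g"
    and lcm: "is_left_lcm C f g H"
  shows "has_sym_normal_decomp C S (env_class C (src C f, [(f, True), (g, False)]))"
proof -
  obtain u v where u: "u \<in> mor C" "tgt C u = src C f" "cmp C u f = H"
    and v: "v \<in> mor C" "tgt C v = src C g" "cmp C v g = H"
    using lcm unfolding is_left_lcm_def right_divides_def by blast
  have disj: "left_disjoint C u v"
    using left_lcm_complements_left_disjoint[OF lc rc lcm f g u v] .
  obtain ts where ts: "normal_path C S ts" "prod_list_cat C ts = u"
    using S u unfolding garside_family_def by blast
  obtain ss where ss: "normal_path C S ss" "prod_list_cat C ss = v"
    using S v unfolding garside_family_def by blast
  have ts': "composable_list C ts" "ts \<noteq> []" and ss': "composable_list C ss" "ss \<noteq> []"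
    using ts ss unfolding normal_path_def by auto
  have "left_disjoint C (hd ts) (hd ss)"
    using left_disjoint_left_divisors[OF disj] left_divides_hd_prod_list_cat ts ts' ss ss' by metis
  moreover have "env_class C (src C f, [(f, True), (g, False)]) =
      env_class C (tgt C (last ts), inv_word ts @ pos_word ss)"
    using env_class_right_fraction_eq_left_fraction[OF f g fg u(1,2) v(1,2)] disj u(3) v(3)
      ts ts' ss ss' unfolding left_disjoint_def by simp
  ultimately show ?thesis
    unfolding has_sym_normal_decomp_def using ts(1) ss(1) by blast
qed

end

section \<open>Actions of a category by bijections\<close>

text \<open>\<open>act_bwd f\<close> is the action of the formal inverse of \<open>f\<close>: a functor into a groupoid of
  bijections, which therefore factors through \<open>Env(C)\<close>.\<close>

locale category_action = small_category C
  for C :: "('o, 'm) category" +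
  fixes D :: "'o \<Rightarrow> 'x set" and act_fwd act_bwd :: "'m \<Rightarrow> 'x \<Rightarrow> 'x"
  assumes act_fwd_in: "f \<in> mor C \<Longrightarrow> n \<in> D (tgt C f) \<Longrightarrow> act_fwd f n \<in> D (src C f)"
    and act_bwd_in: "f \<in> mor C \<Longrightarrow> n \<in> D (src C f) \<Longrightarrow> act_bwd f n \<in> D (tgt C f)"
    and act_fwd_bwd: "f \<in> mor C \<Longrightarrow> n \<in> D (src C f) \<Longrightarrow> act_fwd f (act_bwd f n) = n"
    and act_bwd_fwd: "f \<in> mor C \<Longrightarrow> n \<in> D (tgt C f) \<Longrightarrow> act_bwd f (act_fwd f n) = n"
    and act_fwd_idm: "x \<in> ob C \<Longrightarrow> n \<in> D x \<Longrightarrow> act_fwd (idm C x) n = n"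
    and act_fwd_cmp: "\<lbrakk>f \<in> mor C; g \<in> mor C; tgt C f = src C g; n \<in> D (tgt C g)\<rbrakk> \<Longrightarrow>
      act_fwd f (act_fwd g n) = act_fwd (cmp C f g) n"
begin

definition act_letter :: "'m \<times> bool \<Rightarrow> 'x \<Rightarrow> 'x" where
  "act_letter l = (if snd l then act_fwd (fst l) else act_bwd (fst l))"

definition act_word :: "('m \<times> bool) list \<Rightarrow> 'x \<Rightarrow> 'x" where
  "act_word w = foldr act_letter w"

lemma act_word_Nil [simp]: "act_word [] n = n"
  by (simp add: act_word_def)

lemma act_word_Cons [simp]: "act_word (l # w) n = act_letter l (act_word w n)"
  by (simp add: act_word_def)

lemma act_word_append: "act_word (u @ v) n = act_word u (act_word v n)"
  by (simp add: act_word_def)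

lemma act_word_in: "env_walk C x w \<Longrightarrow> n \<in> D (walk_end C x w) \<Longrightarrow> act_word w n \<in> D x"
  by (induction w arbitrary: x) (auto simp: act_letter_def letter_src_def letter_tgt_def
    act_fwd_in act_bwd_in)

lemma env_step_act_word:
  assumes "env_step C p q"
  shows "env_walk C (fst p) (snd p) \<and> env_walk C (fst q) (snd q) \<and> fst q = fst p \<and>
    walk_end C (fst q) (snd q) = walk_end C (fst p) (snd p) \<and>
    (\<forall>n \<in> D (walk_end C (fst p) (snd p)). act_word (snd p) n = act_word (snd q) n)"
  using assms
proof (cases rule: env_step.cases)
  case (comp x u f g v)
  from comp(3) have w: "env_walk C x u" "f \<in> mor C" "src C f = walk_end C x u" "g \<in> mor C"
    "tgt C f = src C g" "env_walk C (tgt C g) v"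
    by (auto simp: env_walk_append letter_src_def letter_tgt_def)
  have "tgt C (cmp C f g) = tgt C g" using cmp_closed[OF w(2,4,5)] by simp
  moreover have "act_word v n \<in> D (tgt C g)" if "n \<in> D (walk_end C (tgt C g) v)" for n
    using act_word_in[OF w(6) that] .
  ultimately show ?thesis using comp act_fwd_cmp[OF w(2,4,5)]
    by (simp add: walk_end_append act_word_append letter_tgt_def act_letter_def)
next
  case (inv1 x u f v)
  from inv1(3) have w: "f \<in> mor C" "src C f = walk_end C x u" "env_walk C (src C f) v"
    by (auto simp: env_walk_append letter_src_def letter_tgt_def)
  have "act_word v n \<in> D (src C f)" if "n \<in> D (walk_end C (src C f) v)" for n
    using act_word_in[OF w(3) that] .
  then show ?thesis using inv1 act_fwd_bwd[OF w(1)]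
    by (simp add: walk_end_append act_word_append letter_tgt_def act_letter_def w(2)[symmetric])
next
  case (inv2 x u f v)
  from inv2(3) have w: "f \<in> mor C" "tgt C f = walk_end C x u" "env_walk C (tgt C f) v"
    by (auto simp: env_walk_append letter_src_def letter_tgt_def)
  have "act_word v n \<in> D (tgt C f)" if "n \<in> D (walk_end C (tgt C f) v)" for n
    using act_word_in[OF w(3) that] .
  then show ?thesis using inv2 act_bwd_fwd[OF w(1)]
    by (simp add: walk_end_append act_word_append letter_tgt_def act_letter_def w(2)[symmetric])
next
  case (ident x u y v)
  from ident(3) have w: "idm C y \<in> mor C" "src C (idm C y) = walk_end C x u"
      "env_walk C (tgt C (idm C y)) v"
    by (auto simp: env_walk_append letter_src_def letter_tgt_def)
  have y: "y \<in> ob C" using idm_in_mor_imp_ob[OF w(1)] .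
  have "act_word v n \<in> D y" if "n \<in> D (walk_end C y v)" for n
    using act_word_in[of y v n] w(3) that idm_closed[OF y] by simp
  then show ?thesis using ident idm_closed[OF y] act_fwd_idm[OF y]
    by (simp add: walk_end_append act_word_append letter_tgt_def act_letter_def w(2)[symmetric])
qed

lemma env_eq_act_word:
  assumes "env_eq C p q" "env_walk C (fst p) (snd p)"
  shows "env_walk C (fst q) (snd q) \<and> fst q = fst p \<and>
    walk_end C (fst q) (snd q) = walk_end C (fst p) (snd p) \<and>
    (\<forall>n \<in> D (walk_end C (fst p) (snd p)). act_word (snd p) n = act_word (snd q) n)"
  using assms(1) unfolding env_eq_def
proof (induction rule: rtranclp_induct)
  case base
  then show ?case using assms(2) by simp
next
  case (step y z)
  from step(2) have "env_walk C (fst z) (snd z) \<and> fst z = fst y \<and>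
    walk_end C (fst z) (snd z) = walk_end C (fst y) (snd y) \<and>
    (\<forall>n \<in> D (walk_end C (fst y) (snd y)). act_word (snd y) n = act_word (snd z) n)"
    using env_step_act_word by (metis (no_types, lifting))
  then show ?case using step(3) by auto
qed

lemma env_iota_eq_imp_act_fwd_eq:
  assumes f: "f \<in> mor C" and g: "g \<in> mor C" and eq: "env_iota C f = env_iota C g"
  shows "src C g = src C f \<and> tgt C g = tgt C f \<and> (\<forall>n \<in> D (tgt C f). act_fwd f n = act_fwd g n)"
proof -
  have "(src C g, [(g, True)]) \<in> env_class C (src C g, [(g, True)])"
    by (simp add: env_class_def env_eq_refl)
  then have "env_eq C (src C f, [(f, True)]) (src C g, [(g, True)])"
    using eq unfolding env_iota_def env_class_def by blast
  moreover have "env_walk C (src C f) [(f, True)]"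
    using f src_in_ob tgt_in_ob by (simp add: letter_src_def letter_tgt_def)
  ultimately show ?thesis
    using env_eq_act_word by (fastforce simp: letter_tgt_def act_letter_def)
qed

end

section \<open>The multiset invariant of a braided quiver map\<close>

definition arrows_from :: "'a set \<Rightarrow> ('a \<Rightarrow> 'v) \<Rightarrow> 'v \<Rightarrow> 'a set" where
  "arrows_from A s v = {b \<in> A. s b = v}"

text \<open>Only non-degeneracy of \<open>x \<rightharpoonup> \<cdot>\<close> and the first component of the braid relation
  are assumed.  The locale is used twice: for \<open>(\<rightharpoonup>, \<leftharpoondown>)\<close> on the quiver, and for the mirror map
  \<open>(y, x) \<mapsto> (x \<leftharpoondown> y, x \<rightharpoonup> y)\<close> on the opposite quiver, which governs right divisibility.\<close>

locale left_braided_quiver =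
  fixes A :: "'a set" and s t :: "'a \<Rightarrow> 'v" and L R :: "'a \<Rightarrow> 'a \<Rightarrow> 'a"
  assumes quiver_map_closed: "\<lbrakk>x \<in> A; y \<in> A; t x = s y\<rbrakk> \<Longrightarrow>
      L x y \<in> A \<and> R x y \<in> A \<and> t (L x y) = s (R x y) \<and> s (L x y) = s x \<and> t (R x y) = t y"
    and involutive: "\<lbrakk>x \<in> A; y \<in> A; t x = s y\<rbrakk> \<Longrightarrow> L (L x y) (R x y) = x \<and> R (L x y) (R x y) = y"
    and left_nondegenerate: "x \<in> A \<Longrightarrow> bij_betw (L x) (arrows_from A s (t x)) (arrows_from A s (s x))"
    and braid_lact: "\<lbrakk>x \<in> A; y \<in> A; z \<in> A; t x = s y; t y = s z\<rbrakk> \<Longrightarrow>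
      L x (L y z) = L (L x y) (L (R x y) z)"
begin

definition path_from :: "'v \<Rightarrow> 'a list \<Rightarrow> bool" where
  "path_from v w \<longleftrightarrow> arrow_path A s t w \<and> (w \<noteq> [] \<longrightarrow> s (hd w) = v)"

definition path_end :: "'v \<Rightarrow> 'a list \<Rightarrow> 'v" where
  "path_end v w = (if w = [] then v else t (last w))"

definition braid_step :: "'a list \<Rightarrow> 'a list \<Rightarrow> bool" where
  "braid_step w w' \<longleftrightarrow> arrow_path A s t w \<and>
     (\<exists>us x y ws. w = us @ [x, y] @ ws \<and> w' = us @ [L x y, R x y] @ ws)"

abbreviation braid_eq :: "'a list \<Rightarrow> 'a list \<Rightarrow> bool" where
  "braid_eq \<equiv> braid_step\<^sup>*\<^sup>*"

fun path_act :: "'a list \<Rightarrow> 'a \<Rightarrow> 'a" where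
  "path_act [] = id"
| "path_act (x # w) = L x \<circ> path_act w"

fun path_mset :: "'a list \<Rightarrow> 'a multiset" where
  "path_mset [] = {#}"
| "path_mset (x # w) = add_mset x (image_mset (L x) (path_mset w))"

lemma path_from_Nil [simp]: "path_from v []"
  by (simp add: path_from_def)

lemma path_end_Nil [simp]: "path_end v [] = v"
  by (simp add: path_end_def)

lemma path_from_Cons: "path_from v (x # w) \<longleftrightarrow> x \<in> A \<and> s x = v \<and> path_from (t x) w"
  by (auto simp: path_from_def arrow_path_Cons)

lemma path_end_Cons [simp]: "path_end v (x # w) = path_end (t x) w"
  by (simp add: path_end_def)

lemma path_from_append: "path_from v (p @ u) \<longleftrightarrow> path_from v p \<and> path_from (path_end v p) u"
  by (induction p arbitrary: v) (auto simp: path_from_Cons)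

lemma path_end_append: "path_end v (p @ u) = path_end (path_end v p) u"
  by (induction p arbitrary: v) auto

lemma path_from_unique_start:
  "path_from a w \<Longrightarrow> path_from b w \<Longrightarrow> path_end a w = path_end b w \<Longrightarrow> a = b"
  by (cases w) (auto simp: path_from_def)

lemma path_mset_append: "path_mset (u @ v) = path_mset u + image_mset (path_act u) (path_mset v)"
  by (induction u) (auto simp: multiset.map_comp comp_def)

lemma path_act_append: "path_act (u @ v) = path_act u \<circ> path_act v"
  by (induction u) auto

lemma size_path_mset [simp]: "size (path_mset w) = length w"
  by (induction w) auto

lemma inj_on_L: "x \<in> A \<Longrightarrow> inj_on (L x) (arrows_from A s (t x))"
  using left_nondegenerate bij_betw_imp_inj_on by blast

lemma path_act_bij:
  "path_from v w \<Longrightarrow> bij_betw (path_act w) (arrows_from A s (path_end v w)) (arrows_from A s v)"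
proof (induction w arbitrary: v)
  case (Cons x w)
  then have "x \<in> A" "s x = v" "path_from (t x) w" by (auto simp: path_from_Cons)
  then have "bij_betw (L x \<circ> path_act w) (arrows_from A s (path_end (t x) w)) (arrows_from A s v)"
    using Cons.IH[of "t x"] left_nondegenerate[of x] by (auto intro: bij_betw_trans)
  then show ?case by (simp add: comp_def)
qed (simp add: bij_betw_def)

lemma set_path_mset_subset: "path_from v w \<Longrightarrow> set_mset (path_mset w) \<subseteq> arrows_from A s v"
proof (induction w arbitrary: v)
  case (Cons x w)
  then have "x \<in> A" "s x = v" "path_from (t x) w" by (auto simp: path_from_Cons)
  with Cons.IH[of "t x"] left_nondegenerate[of x] show ?case
    by (auto simp: arrows_from_def bij_betw_def)
qed simp

lemma arrow_path_swap:
  "arrow_path A s t (us @ x # y # ws) \<Longrightarrow> arrow_path A s t (us @ L x y # R x y # ws)"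
  using quiver_map_closed[of x y] by (auto simp: arrow_path_append arrow_path_Cons)

lemma braid_stepE:
  assumes "braid_step w w'"
  obtains us x y ws where "w = us @ [x, y] @ ws" "w' = us @ [L x y, R x y] @ ws"
    "x \<in> A" "y \<in> A" "t x = s y" "path_from (t y) ws"
proof -
  obtain us x y ws where *: "arrow_path A s t (us @ [x, y] @ ws)"
    "w = us @ [x, y] @ ws" "w' = us @ [L x y, R x y] @ ws"
    using assms unfolding braid_step_def by blast
  from *(1) have "x \<in> A" "y \<in> A" "t x = s y" "path_from (t y) ws"
    by (auto simp: arrow_path_append arrow_path_Cons path_from_def)
  with * that show ?thesis by blast
qed

lemma braid_step_arrow_path: "braid_step w w' \<Longrightarrow> arrow_path A s t w'"
  unfolding braid_step_def using arrow_path_swap by auto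

lemma braid_step_sym: "braid_step w w' \<Longrightarrow> braid_step w' w"
proof -
  assume step: "braid_step w w'"
  then obtain us x y ws where "w = us @ [x, y] @ ws" "w' = us @ [L x y, R x y] @ ws"
    "x \<in> A" "y \<in> A" "t x = s y"
    by (rule braid_stepE)
  then show "braid_step w' w"
    using braid_step_arrow_path[OF step] involutive[of x y] unfolding braid_step_def by metis
qed

lemma braid_eq_sym: "braid_eq w w' \<Longrightarrow> braid_eq w' w"
  using sympD[OF symp_rtranclp[OF sympI[OF braid_step_sym]]] .

lemma braid_step_path_from:
  assumes "braid_step w w'" "path_from v w"
  shows "path_from v w' \<and> path_end v w' = path_end v w \<and> length w' = length w"
proof -
  obtain us x y ws where "w = us @ [x, y] @ ws" "w' = us @ [L x y, R x y] @ ws"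
    "x \<in> A" "y \<in> A" "t x = s y"
    using assms(1) by (rule braid_stepE)
  then show ?thesis
    using assms braid_step_arrow_path quiver_map_closed[of x y]
    by (auto simp: path_from_def path_end_def hd_append last_append)
qed

lemma braid_eq_path_from:
  "braid_eq w w' \<Longrightarrow> path_from v w \<Longrightarrow>
    path_from v w' \<and> path_end v w' = path_end v w \<and> length w' = length w"
  by (induction rule: rtranclp_induct) (use braid_step_path_from in fastforce)+

lemma braid_step_context:
  "braid_step w w' \<Longrightarrow> arrow_path A s t (p @ w @ q) \<Longrightarrow> braid_step (p @ w @ q) (p @ w' @ q)"
  unfolding braid_step_def by (metis append.assoc)

lemma braid_eq_arrow_path: "braid_eq w w' \<Longrightarrow> arrow_path A s t w \<Longrightarrow> arrow_path A s t w'"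
  by (induction rule: rtranclp_induct) (auto intro: braid_step_arrow_path)

lemma braid_eq_context:
  "braid_eq w w' \<Longrightarrow> arrow_path A s t (p @ w @ q) \<Longrightarrow> braid_eq (p @ w @ q) (p @ w' @ q)"
proof (induction rule: rtranclp_induct)
  case (step y z)
  then have "arrow_path A s t (p @ y @ q)" using braid_eq_arrow_path by blast
  with step show ?case by (meson rtranclp.rtrancl_into_rtrancl braid_step_context)
qed simp

lemma braid_eq_Cons: "braid_eq w w' \<Longrightarrow> path_from v (x # w) \<Longrightarrow> braid_eq (x # w) (x # w')"
  using braid_eq_context[of w w' "[x]" "[]"] by (simp add: path_from_def)

lemma path_mset_braid_step: "braid_step w w' \<Longrightarrow> path_mset w = path_mset w'"
proof -
  assume "braid_step w w'"
  then obtain us x y ws where *: "w = us @ [x, y] @ ws" "w' = us @ [L x y, R x y] @ ws"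
    "x \<in> A" "y \<in> A" "t x = s y" "path_from (t y) ws"
    by (rule braid_stepE)
  have "image_mset (L x \<circ> L y) (path_mset ws) = image_mset (L (L x y) \<circ> L (R x y)) (path_mset ws)"
  proof (rule image_mset_cong)
    fix b assume "b \<in># path_mset ws"
    then have "b \<in> A" "s b = t y"
      using set_path_mset_subset[OF *(6)] by (auto simp: arrows_from_def)
    then show "(L x \<circ> L y) b = (L (L x y) \<circ> L (R x y)) b" using braid_lact[of x y b] * by simp
  qed
  then have "path_mset [x, y] = path_mset [L x y, R x y]"
    and "path_mset (x # y # ws) = path_mset (L x y # R x y # ws)"
    using involutive[of x y] * by (simp_all add: multiset.map_comp)
  then show ?thesis using * path_mset_append[of us] by simp
qed

lemma path_mset_braid_eq: "braid_eq w w' \<Longrightarrow> path_mset w = path_mset w'"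
  by (induction rule: rtranclp_induct) (auto simp: path_mset_braid_step)

lemma path_act_braid_step:
  assumes "braid_step w w'" "path_from v w" "b \<in> arrows_from A s (path_end v w)"
  shows "path_act w b = path_act w' b"
proof -
  obtain us x y ws where *: "w = us @ [x, y] @ ws" "w' = us @ [L x y, R x y] @ ws"
    "x \<in> A" "y \<in> A" "t x = s y" "path_from (t y) ws"
    using assms(1) by (rule braid_stepE)
  have "path_end v w = path_end (t y) ws" using * by (simp add: path_end_append)
  then have "path_act ws b \<in> arrows_from A s (t y)"
    using bij_betwE[OF path_act_bij[OF *(6)]] assms(3) by simp
  then have "L x (L y (path_act ws b)) = L (L x y) (L (R x y) (path_act ws b))"
    using braid_lact[of x y "path_act ws b"] * by (simp add: arrows_from_def)
  then show ?thesis using * by (simp add: path_act_append)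
qed

lemma path_act_braid_eq:
  "braid_eq w w' \<Longrightarrow> path_from v w \<Longrightarrow> b \<in> arrows_from A s (path_end v w) \<Longrightarrow>
    path_act w b = path_act w' b"
proof (induction rule: rtranclp_induct)
  case (step y z)
  then have "path_from v y" "path_end v y = path_end v w" using braid_eq_path_from by blast+
  with step path_act_braid_step[OF step(2)] show ?case by metis
qed simp

lemma braid_eq_Cons_of_in_path_mset:
  "path_from v w \<Longrightarrow> a \<in># path_mset w \<Longrightarrow> \<exists>u. braid_eq w (a # u)"
proof (induction w arbitrary: v a)
  case (Cons x w)
  then have x: "x \<in> A" "s x = v" and w: "path_from (t x) w" by (auto simp: path_from_Cons)
  show ?case
  proof (cases "a = x")
    case False
    then obtain b where b: "b \<in># path_mset w" "a = L x b" using Cons.prems by auto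
    obtain u where u: "braid_eq w (b # u)" using Cons.IH[OF w b(1)] by blast
    have "path_from (t x) (b # u)" using braid_eq_path_from[OF u w] by simp
    then have "arrow_path A s t (x # b # u)" using x by (auto simp: path_from_def arrow_path_Cons)
    then have "braid_step (x # b # u) (L x b # R x b # u)"
      unfolding braid_step_def by (metis append.left_neutral append_Cons)
    with braid_eq_Cons[OF u Cons.prems(1)] b show ?thesis by (meson rtranclp.rtrancl_into_rtrancl)
  qed blast
qed simp

lemma braid_eq_of_path_mset_eq:
  "path_from v w \<Longrightarrow> path_from v w' \<Longrightarrow> path_mset w = path_mset w' \<Longrightarrow> braid_eq w w'"
proof (induction w arbitrary: w' v)
  case Nil
  then show ?case using size_path_mset[of w'] by simp
next
  case (Cons a u)
  then have a: "a \<in> A" "s a = v" and u: "path_from (t a) u" by (auto simp: path_from_Cons)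
  have "a \<in># path_mset w'" using Cons.prems by (metis path_mset.simps(2) union_single_eq_member)
  then obtain u' where e: "braid_eq w' (a # u')"
    using braid_eq_Cons_of_in_path_mset Cons.prems by blast
  have u': "path_from (t a) u'"
    using braid_eq_path_from[OF e] Cons.prems by (simp add: path_from_Cons)
  have "image_mset (L a) (path_mset u) = image_mset (L a) (path_mset u')"
    using path_mset_braid_eq[OF e] Cons.prems by simp
  then have "path_mset u = path_mset u'"
    using image_mset_inj_on_eq[OF inj_on_L[OF a(1)]] set_path_mset_subset[OF u]
      set_path_mset_subset[OF u']
    by blast
  then have "braid_eq (a # u) (a # u')" using braid_eq_Cons Cons.IH u u' Cons.prems(1) by blast
  then show ?case using braid_eq_sym[OF e] by (meson rtranclp_trans)
qed

lemma braid_eq_cancel_left: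
  assumes "path_from v (p @ u)" "path_from v (p @ u')" "braid_eq (p @ u) (p @ u')"
  shows "braid_eq u u'"
proof -
  have p: "path_from v p" and u: "path_from (path_end v p) u" and u': "path_from (path_end v p) u'"
    using assms by (auto simp: path_from_append)
  have "image_mset (path_act p) (path_mset u) = image_mset (path_act p) (path_mset u')"
    using path_mset_braid_eq[OF assms(3)] by (simp add: path_mset_append)
  then have "path_mset u = path_mset u'"
    using image_mset_inj_on_eq[OF bij_betw_imp_inj_on[OF path_act_bij[OF p]]]
      set_path_mset_subset[OF u] set_path_mset_subset[OF u'] by blast
  then show ?thesis using braid_eq_of_path_mset_eq u u' by blast
qed

lemma braid_eq_append_of_path_mset_subseteq:
  "path_from v f \<Longrightarrow> path_from v g \<Longrightarrow> path_mset f \<subseteq># path_mset g \<Longrightarrow>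
   \<exists>h. path_from v (f @ h) \<and> braid_eq g (f @ h)"
proof (induction f arbitrary: g v)
  case (Cons a f)
  then have a: "a \<in> A" "s a = v" and f: "path_from (t a) f" by (auto simp: path_from_Cons)
  have "a \<in># path_mset g" using Cons.prems(3) by (simp add: insert_subset_eq_iff)
  then obtain g' where e: "braid_eq g (a # g')"
    using braid_eq_Cons_of_in_path_mset Cons.prems by blast
  have ag': "path_from v (a # g')" using braid_eq_path_from[OF e] Cons.prems by blast
  then have g': "path_from (t a) g'" by (simp add: path_from_Cons)
  have "image_mset (L a) (path_mset f) \<subseteq># image_mset (L a) (path_mset g')"
    using path_mset_braid_eq[OF e] Cons.prems by simp
  then have "path_mset f \<subseteq># path_mset g'"
    using image_mset_inj_on_subseteq[OF inj_on_L[OF a(1)]] set_path_mset_subset[OF f]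
      set_path_mset_subset[OF g']
    by blast
  then obtain h where h: "path_from (t a) (f @ h)" "braid_eq g' (f @ h)" using Cons.IH f g' by blast
  have "braid_eq (a # g') (a # f @ h)" using braid_eq_Cons[OF h(2) ag'] .
  moreover have "path_from v ((a # f) @ h)" using h a by (simp add: path_from_Cons)
  ultimately show ?case using e by (metis rtranclp_trans append_Cons)
qed (use rtranclp.rtrancl_refl in auto)

lemma path_mset_surj: "set_mset M \<subseteq> arrows_from A s v \<Longrightarrow> \<exists>w. path_from v w \<and> path_mset w = M"
proof (induction "size M" arbitrary: M v)
  case (Suc n)
  then obtain a where a: "a \<in># M" by (metis size_empty nat.distinct(1) multiset_nonemptyE)
  define M' where "M' = M - {#a#}"
  have M: "M = add_mset a M'" using a by (simp add: M'_def)
  have aA: "a \<in> A" "s a = v" using a Suc.prems by (auto simp: arrows_from_def)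
  have bij: "bij_betw (L a) (arrows_from A s (t a)) (arrows_from A s v)"
    using left_nondegenerate[OF aA(1)] aA by simp
  define N where "N = image_mset (inv_into (arrows_from A s (t a)) (L a)) M'"
  have M': "set_mset M' \<subseteq> arrows_from A s v" using Suc.prems M by auto
  have "set_mset N \<subseteq> arrows_from A s (t a)"
    using M' bij_betw_inv_into[OF bij] by (auto simp: N_def bij_betw_def)
  moreover have "n = size N" using Suc.hyps(2) M by (simp add: N_def)
  ultimately obtain w where w: "path_from (t a) w" "path_mset w = N" using Suc.hyps(1) by blast
  have "image_mset (L a) N = image_mset (L a \<circ> inv_into (arrows_from A s (t a)) (L a)) M'"
    by (simp add: N_def multiset.map_comp)
  also have "\<dots> = image_mset id M'"
    by (rule image_mset_cong) (use M' bij in \<open>auto simp: bij_betw_inv_into_right\<close>)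
  finally show ?case using w aA M by (intro exI[of _ "a # w"]) (simp add: path_from_Cons)
qed (intro exI[of _ "[]"], simp)

end

section \<open>The structure category of an involutive non-degenerate Yang--Baxter map\<close>

locale involutive_nondegenerate_ybm =
  fixes Lam :: "'v set" and A :: "'a set" and s t :: "'a \<Rightarrow> 'v" and \<sigma> :: "'a \<times> 'a \<Rightarrow> 'a \<times> 'a"
  assumes ybm: "yang_baxter_map Lam A s t \<sigma>"
    and invol: "involutive_qmap A s t \<sigma>"
    and nondeg: "nondegenerate A s t \<sigma>"
begin

lemma arrow_ends_in_Lam: "x \<in> A \<Longrightarrow> s x \<in> Lam \<and> t x \<in> Lam"
  using ybm by (auto simp: yang_baxter_map_def is_quiver_def)

lemma lact_ract_closed: "\<lbrakk>x \<in> A; y \<in> A; t x = s y\<rbrakk> \<Longrightarrow>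
    lact \<sigma> x y \<in> A \<and> ract \<sigma> x y \<in> A \<and> t (lact \<sigma> x y) = s (ract \<sigma> x y) \<and>
    s (lact \<sigma> x y) = s x \<and> t (ract \<sigma> x y) = t y"
  using ybm by (auto simp: yang_baxter_map_def quiver_map_def composable_def)

lemma lact_ract_involutive: "\<lbrakk>x \<in> A; y \<in> A; t x = s y\<rbrakk> \<Longrightarrow>
    lact \<sigma> (lact \<sigma> x y) (ract \<sigma> x y) = x \<and> ract \<sigma> (lact \<sigma> x y) (ract \<sigma> x y) = y"
  using invol by (auto simp: involutive_qmap_def composable_def lact_def ract_def)

lemma braid_relation_components:
  assumes "x \<in> A" "y \<in> A" "z \<in> A" "t x = s y" "t y = s z"
  shows "lact \<sigma> x (lact \<sigma> y z) = lact \<sigma> (lact \<sigma> x y) (lact \<sigma> (ract \<sigma> x y) z)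
       \<and> ract \<sigma> (ract \<sigma> x y) z = ract \<sigma> (ract \<sigma> x (lact \<sigma> y z)) (ract \<sigma> y z)"
proof -
  have "sigma12 \<sigma> (sigma23 \<sigma> (sigma12 \<sigma> (x, y, z))) = sigma23 \<sigma> (sigma12 \<sigma> (sigma23 \<sigma> (x, y, z)))"
    using ybm assms by (auto simp: yang_baxter_map_def composable_def)
  then show ?thesis
    by (simp add: sigma12_def sigma23_def lact_def ract_def case_prod_unfold) (metis snd_conv)
qed

sublocale left: left_braided_quiver A s t "lact \<sigma>" "ract \<sigma>"
proof
  show "bij_betw (lact \<sigma> x) (arrows_from A s (t x)) (arrows_from A s (s x))" if "x \<in> A" for x
    using nondeg that unfolding nondegenerate_def arrows_from_def by blast
qed (use lact_ract_closed in force, use lact_ract_involutive in force,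
     use braid_relation_components in force)

sublocale mirror: left_braided_quiver A t s "\<lambda>y x. ract \<sigma> x y" "\<lambda>y x. lact \<sigma> x y"
proof
  show "bij_betw (\<lambda>x. ract \<sigma> x y) (arrows_from A t (s y)) (arrows_from A t (t y))" if "y \<in> A" for y
    using nondeg that unfolding nondegenerate_def arrows_from_def by blast
qed (use lact_ract_closed in force, use lact_ract_involutive in force,
     use braid_relation_components in force)

lemma braid_step_rev: "left.braid_step w w' \<Longrightarrow> mirror.braid_step (rev w) (rev w')"
proof -
  assume "left.braid_step w w'"
  then obtain us x y ws where *: "arrow_path A s t w" "w = us @ [x, y] @ ws"
    "w' = us @ [lact \<sigma> x y, ract \<sigma> x y] @ ws"
    unfolding left.braid_step_def by blast
  have "rev w = rev ws @ [y, x] @ rev us" "rev w' = rev ws @ [ract \<sigma> x y, lact \<sigma> x y] @ rev us"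
    using * by auto
  moreover have "arrow_path A t s (rev w)" using *(1) arrow_path_rev by blast
  ultimately show ?thesis unfolding mirror.braid_step_def by blast
qed

lemma mirror_braid_step_rev: "mirror.braid_step w w' \<Longrightarrow> left.braid_step (rev w) (rev w')"
proof -
  assume "mirror.braid_step w w'"
  then obtain us x y ws where *: "arrow_path A t s w" "w = us @ [x, y] @ ws"
    "w' = us @ [ract \<sigma> y x, lact \<sigma> y x] @ ws"
    unfolding mirror.braid_step_def by blast
  have "rev w = rev ws @ [y, x] @ rev us" "rev w' = rev ws @ [lact \<sigma> y x, ract \<sigma> y x] @ rev us"
    using * by auto
  moreover have "arrow_path A s t (rev w)" using *(1) by (metis arrow_path_rev)
  ultimately show ?thesis unfolding left.braid_step_def by blast
qed

lemma braid_eq_rev: "left.braid_eq w w' \<Longrightarrow> mirror.braid_eq (rev w) (rev w')"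
  by (induction rule: rtranclp_induct) (auto intro: rtranclp.rtrancl_into_rtrancl braid_step_rev)

lemma mirror_braid_eq_rev: "mirror.braid_eq w w' \<Longrightarrow> left.braid_eq (rev w) (rev w')"
  by (induction rule: rtranclp_induct) (auto intro: rtranclp.rtrancl_into_rtrancl
    mirror_braid_step_rev)

lemma path_from_rev_iff:
  "(left.path_from x w \<and> left.path_end x w = y) \<longleftrightarrow>
    (mirror.path_from y (rev w) \<and> mirror.path_end y (rev w) = x)"
  unfolding left.path_from_def mirror.path_from_def left.path_end_def mirror.path_end_def
    arrow_path_rev
  by (auto simp: hd_rev last_rev)

lemma path_end_in_Lam: "left.path_from x w \<Longrightarrow> x \<in> Lam \<Longrightarrow> left.path_end x w \<in> Lam"
proof (cases "w = []")
  case False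
  assume "left.path_from x w"
  then have "last w \<in> A"
    using arrow_path_last_in[of A s t w] False by (auto simp: left.path_from_def)
  then show ?thesis using arrow_ends_in_Lam False by (simp add: left.path_end_def)
qed (simp add: left.path_end_def)

lemma path_start_in_Lam: "left.path_from x w \<Longrightarrow> left.path_end x w \<in> Lam \<Longrightarrow> x \<in> Lam"
proof (cases w)
  case (Cons a l)
  assume "left.path_from x w"
  then have "a \<in> A" "s a = x"
    using arrow_path_Cons_in[of A s t a l] Cons by (auto simp: left.path_from_def)
  then show ?thesis using arrow_ends_in_Lam by blast
qed (simp add: left.path_end_def)

abbreviation "C \<equiv> structure_category Lam A s t \<sigma>"
abbreviation "valid \<equiv> valid_path Lam A s t"
abbreviation "cls \<equiv> sc_class Lam A s t \<sigma>"

definition rep :: "('v \<times> 'a list) set \<Rightarrow> 'v \<times> 'a list" where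
  "rep M = (SOME q. q \<in> M)"

lemma valid_path_iff: "valid p \<longleftrightarrow> fst p \<in> Lam \<and> left.path_from (fst p) (snd p)"
  by (auto simp: valid_path_def left.path_from_def)

lemma valid_path_mirror: "valid p \<Longrightarrow> mirror.path_from (left.path_end (fst p) (snd p)) (rev (snd p))"
  using path_from_rev_iff[of "fst p" "snd p" "left.path_end (fst p) (snd p)"] valid_path_iff
  by blast

lemma sc_stepD:
  "sc_step Lam A s t \<sigma> p q \<Longrightarrow> valid p \<and> fst q = fst p \<and> left.braid_step (snd p) (snd q)"
  by (induction rule: sc_step.induct) (auto simp: left.braid_step_def valid_path_def)

lemma sc_stepI: "valid p \<Longrightarrow> left.braid_step (snd p) w \<Longrightarrow> sc_step Lam A s t \<sigma> p (fst p, w)"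
  unfolding left.braid_step_def
  using sc_step.intros[of Lam A s t "fst p"] by (cases p) (auto simp: lact_def ract_def)

lemma sc_eq_imp_braid_eq:
  "sc_eq Lam A s t \<sigma> p q \<Longrightarrow> valid p \<Longrightarrow> valid q \<and> fst q = fst p \<and> left.braid_eq (snd p) (snd q)"
  unfolding sc_eq_def
proof (induction rule: rtranclp_induct)
  case (step y z)
  then have y: "valid y" "fst y = fst p" "left.braid_eq (snd p) (snd y)" by auto
  from step(2) show ?case
  proof
    assume "sc_step Lam A s t \<sigma> y z"
    then have "fst z = fst y" "left.braid_step (snd y) (snd z)" using sc_stepD by blast+
    moreover have "left.path_from (fst y) (snd z)"
      using left.braid_eq_path_from[of "snd y" "snd z"] y(1) calculation(2) valid_path_iff by blast
    ultimately show ?thesis using y valid_path_iff by (metis rtranclp.rtrancl_into_rtrancl)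
  next
    assume "sc_step Lam A s t \<sigma> z y"
    then have "valid z" "fst y = fst z" "left.braid_step (snd z) (snd y)" using sc_stepD by blast+
    then show ?thesis using y left.braid_step_sym by (metis rtranclp.rtrancl_into_rtrancl)
  qed
qed simp

lemma braid_eq_imp_sc_eq: "left.braid_eq (snd p) w \<Longrightarrow> valid p \<Longrightarrow> sc_eq Lam A s t \<sigma> p (fst p, w)"
proof (induction rule: rtranclp_induct)
  case (step y z)
  have "valid (fst p, y)" using left.braid_eq_path_from[OF step(1)] step(4) valid_path_iff by auto
  then have "sc_step Lam A s t \<sigma> (fst p, y) (fst p, z)" using sc_stepI step(2) by fastforce
  then show ?case using step unfolding sc_eq_def by (auto intro: rtranclp.rtrancl_into_rtrancl)
qed (simp add: sc_eq_def)

lemma mem_sc_class_iff: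
  "valid p \<Longrightarrow> q \<in> cls p \<longleftrightarrow> valid q \<and> fst q = fst p \<and> left.braid_eq (snd p) (snd q)"
  unfolding sc_class_def using sc_eq_imp_braid_eq braid_eq_imp_sc_eq
  by (metis mem_Collect_eq prod.collapse)

lemma sc_class_eq_iff:
  assumes "valid p" "valid q"
  shows "cls p = cls q \<longleftrightarrow> fst p = fst q \<and> left.braid_eq (snd p) (snd q)"
proof
  assume "cls p = cls q"
  moreover have "q \<in> cls q" using mem_sc_class_iff[OF assms(2)] assms(2) by simp
  ultimately show "fst p = fst q \<and> left.braid_eq (snd p) (snd q)"
    using mem_sc_class_iff[OF assms(1)] by auto
next
  assume "fst p = fst q \<and> left.braid_eq (snd p) (snd q)"
  then show "cls p = cls q"
  proof (intro set_eqI)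
    fix r
    show "r \<in> cls p \<longleftrightarrow> r \<in> cls q"
      using \<open>fst p = fst q \<and> left.braid_eq (snd p) (snd q)\<close>
        mem_sc_class_iff[OF assms(1)] mem_sc_class_iff[OF assms(2)] left.braid_eq_sym
      by (metis rtranclp_trans)
  qed
qed

lemma rep_sc_class:
  "valid p \<Longrightarrow> valid (rep (cls p)) \<and> fst (rep (cls p)) = fst p \<and> left.braid_eq (snd p) (snd (rep (cls p)))"
proof -
  assume p: "valid p"
  have "p \<in> cls p" using mem_sc_class_iff[OF p] p by simp
  then have "rep (cls p) \<in> cls p" unfolding rep_def by (rule someI)
  then show ?thesis using mem_sc_class_iff[OF p] by blast
qed

lemma sc_class_rep: "valid p \<Longrightarrow> cls (rep (cls p)) = cls p"
  using rep_sc_class sc_class_eq_iff left.braid_eq_sym by metis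

lemma mor_C: "mor C = cls ` {p. valid p}"
  by (simp add: structure_category_def)

lemma ob_C: "ob C = Lam"
  by (simp add: structure_category_def)

lemma idm_C: "idm C v = cls (v, [])"
  by (simp add: structure_category_def)

lemma mor_sc_classE:
  assumes "f \<in> mor C"
  obtains p where "valid p" "f = cls p"
  using assms mor_C by auto

lemma sc_class_in_mor: "valid p \<Longrightarrow> cls p \<in> mor C"
  using mor_C by auto

lemma src_sc_class: "valid p \<Longrightarrow> src C (cls p) = fst p"
  using rep_sc_class unfolding rep_def by (simp add: structure_category_def)

lemma tgt_sc_class: "valid p \<Longrightarrow> tgt C (cls p) = left.path_end (fst p) (snd p)"
proof -
  assume p: "valid p"
  have r: "fst (rep (cls p)) = fst p" "left.braid_eq (snd p) (snd (rep (cls p)))"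
    using rep_sc_class[OF p] by auto
  have "tgt C (cls p) = left.path_end (fst (rep (cls p))) (snd (rep (cls p)))"
    by (simp add: structure_category_def rep_def path_tgt_def left.path_end_def)
  also have "\<dots> = left.path_end (fst p) (snd p)"
    using left.braid_eq_path_from[OF r(2)] p r(1) valid_path_iff by simp
  finally show ?thesis .
qed

lemma valid_path_append:
  "valid p \<Longrightarrow> valid q \<Longrightarrow> left.path_end (fst p) (snd p) = fst q \<Longrightarrow> valid (fst p, snd p @ snd q)"
  using valid_path_iff left.path_from_append by auto

lemma cmp_sc_class:
  assumes p: "valid p" and q: "valid q" and pq: "left.path_end (fst p) (snd p) = fst q"
  shows "cmp C (cls p) (cls q) = cls (fst p, snd p @ snd q)"
proof -
  define r1 where "r1 = rep (cls p)"
  define r2 where "r2 = rep (cls q)"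
  have r1: "valid r1" "fst r1 = fst p" "left.braid_eq (snd p) (snd r1)"
    using rep_sc_class[OF p] r1_def by auto
  have r2: "valid r2" "fst r2 = fst q" "left.braid_eq (snd q) (snd r2)"
    using rep_sc_class[OF q] r2_def by auto
  have v1: "valid (fst p, snd p @ snd q)" using valid_path_append[OF p q pq] .
  have "left.path_end (fst r1) (snd r1) = fst r2"
    using left.braid_eq_path_from[OF r1(3)] p valid_path_iff r1 r2 pq by metis
  then have v2: "valid (fst r1, snd r1 @ snd r2)" using valid_path_append[OF r1(1) r2(1)] by blast
  have "arrow_path A s t ([] @ snd p @ snd q)" using v1 valid_path_iff left.path_from_def by simp
  then have e1: "left.braid_eq (snd p @ snd q) (snd r1 @ snd q)"
    using left.braid_eq_context[OF r1(3), of "[]" "snd q"] by simp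
  have "left.path_from (fst p) (snd r1 @ snd q)"
    using v1 valid_path_iff left.path_from_append left.braid_eq_path_from[OF r1(3)] p by auto
  then have "arrow_path A s t (snd r1 @ snd q @ [])" using left.path_from_def by simp
  then have e2: "left.braid_eq (snd r1 @ snd q) (snd r1 @ snd r2)"
    using left.braid_eq_context[OF r2(3), of "snd r1" "[]"] by simp
  have "cmp C (cls p) (cls q) = cls (fst r1, snd r1 @ snd r2)"
    by (simp add: structure_category_def r1_def r2_def rep_def)
  also have "\<dots> = cls (fst p, snd p @ snd q)"
    using sc_class_eq_iff[OF v2 v1] e1 e2 r1 left.braid_eq_sym
    by (metis fst_conv snd_conv rtranclp_trans)
  finally show ?thesis .
qed

sublocale small_category C
proof
  show "src C f \<in> ob C" and "tgt C f \<in> ob C" if f: "f \<in> mor C" for f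
  proof -
    obtain p where "valid p" "f = cls p" using mor_sc_classE[OF f] .
    then show "src C f \<in> ob C" "tgt C f \<in> ob C"
      using path_end_in_Lam by (simp_all add: ob_C src_sc_class tgt_sc_class valid_path_iff)
  qed
  show "cmp C f g \<in> mor C \<and> src C (cmp C f g) = src C f \<and> tgt C (cmp C f g) = tgt C g"
    if fg: "f \<in> mor C" "g \<in> mor C" "tgt C f = src C g" for f g
  proof -
    obtain p where p: "valid p" "f = cls p" using mor_sc_classE[OF fg(1)] .
    obtain q where q: "valid q" "g = cls q" using mor_sc_classE[OF fg(2)] .
    have pq: "left.path_end (fst p) (snd p) = fst q"
      using fg p q by (simp add: src_sc_class tgt_sc_class)
    show ?thesis
      using cmp_sc_class[OF p(1) q(1) pq] p q valid_path_append[OF p(1) q(1) pq] pq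
      by (simp add: sc_class_in_mor src_sc_class tgt_sc_class left.path_end_append)
  qed
  show "cmp C (cmp C f g) h = cmp C f (cmp C g h)"
    if fgh: "f \<in> mor C" "g \<in> mor C" "h \<in> mor C" "tgt C f = src C g" "tgt C g = src C h" for f g h
  proof -
    obtain p where p: "valid p" "f = cls p" using mor_sc_classE[OF fgh(1)] .
    obtain q where q: "valid q" "g = cls q" using mor_sc_classE[OF fgh(2)] .
    obtain r where r: "valid r" "h = cls r" using mor_sc_classE[OF fgh(3)] .
    have pq: "left.path_end (fst p) (snd p) = fst q"
      using fgh p q by (simp add: src_sc_class tgt_sc_class)
    have qr: "left.path_end (fst q) (snd q) = fst r"
      using fgh q r by (simp add: src_sc_class tgt_sc_class)
    have pqr: "left.path_end (fst p) (snd p @ snd q) = fst r"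
      using pq qr by (simp add: left.path_end_append)
    show ?thesis
      using cmp_sc_class[OF p(1) q(1) pq] cmp_sc_class[OF q(1) r(1) qr] p q r pq pqr
        cmp_sc_class[OF valid_path_append[OF p(1) q(1) pq] r(1)]
        cmp_sc_class[OF p(1) valid_path_append[OF q(1) r(1) qr]]
      by simp
  qed
  show "idm C x \<in> mor C \<and> src C (idm C x) = x \<and> tgt C (idm C x) = x" if x: "x \<in> ob C" for x
    using x sc_class_in_mor src_sc_class tgt_sc_class by (simp add: idm_C ob_C valid_path_iff)
  show "cmp C (idm C (src C f)) f = f" if f: "f \<in> mor C" for f
  proof -
    obtain p where p: "valid p" "f = cls p" using mor_sc_classE[OF f] .
    then have "valid (fst p, [])" by (simp add: valid_path_iff)
    then show ?thesis using cmp_sc_class[OF _ p(1)] p idm_C src_sc_class by simp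
  qed
  show "cmp C f (idm C (tgt C f)) = f" if f: "f \<in> mor C" for f
  proof -
    obtain p where p: "valid p" "f = cls p" using mor_sc_classE[OF f] .
    then have "valid (left.path_end (fst p) (snd p), [])"
      using path_end_in_Lam by (simp add: valid_path_iff)
    then show ?thesis using cmp_sc_class[OF p(1)] p idm_C tgt_sc_class by simp
  qed
  show "x \<in> ob C" if x: "idm C x \<in> mor C" for x
  proof -
    obtain p where p: "valid p" "idm C x = cls p" using mor_sc_classE[OF x] .
    have "(x, []) \<in> cls (x, [])" by (simp add: sc_class_def sc_eq_def)
    then have "(x, []) \<in> cls p" using p idm_C by simp
    then show ?thesis using mem_sc_class_iff[OF p(1)] valid_path_iff ob_C by auto
  qed
qed

lemma left_cancellative_C: "left_cancellative C"
  unfolding left_cancellative_def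
proof (intro ballI impI)
  fix f g g' assume m: "f \<in> mor C" "g \<in> mor C" "g' \<in> mor C"
    and st: "src C g = tgt C f" "src C g' = tgt C f" and eq: "cmp C f g = cmp C f g'"
  obtain p where p: "valid p" "f = cls p" using mor_sc_classE[OF m(1)] .
  obtain q where q: "valid q" "g = cls q" using mor_sc_classE[OF m(2)] .
  obtain q' where q': "valid q'" "g' = cls q'" using mor_sc_classE[OF m(3)] .
  have pq: "left.path_end (fst p) (snd p) = fst q"
    using st p q by (simp add: src_sc_class tgt_sc_class)
  have pq': "left.path_end (fst p) (snd p) = fst q'"
    using st p q' by (simp add: src_sc_class tgt_sc_class)
  have v: "valid (fst p, snd p @ snd q)" using valid_path_append[OF p(1) q(1) pq] .
  have v': "valid (fst p, snd p @ snd q')" using valid_path_append[OF p(1) q'(1) pq'] .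
  have "left.braid_eq (snd p @ snd q) (snd p @ snd q')"
    using eq cmp_sc_class[OF p(1) q(1) pq] cmp_sc_class[OF p(1) q'(1) pq'] p q q'
      sc_class_eq_iff[OF v v']
    by simp
  then have "left.braid_eq (snd q) (snd q')"
    using left.braid_eq_cancel_left v v' valid_path_iff by (metis fst_conv snd_conv)
  then show "g = g'" using sc_class_eq_iff[OF q(1) q'(1)] q q' pq pq' by simp
qed

text \<open>Right cancellation is left cancellation for the mirror map, applied to reversed paths.\<close>

lemma right_cancellative_C: "right_cancellative C"
  unfolding right_cancellative_def
proof (intro ballI impI)
  fix f f' g assume m: "f \<in> mor C" "f' \<in> mor C" "g \<in> mor C"
    and st: "tgt C f = src C g" "tgt C f' = src C g" and eq: "cmp C f g = cmp C f' g"
  obtain p where p: "valid p" "f = cls p" using mor_sc_classE[OF m(1)] .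
  obtain p' where p': "valid p'" "f' = cls p'" using mor_sc_classE[OF m(2)] .
  obtain q where q: "valid q" "g = cls q" using mor_sc_classE[OF m(3)] .
  have pq: "left.path_end (fst p) (snd p) = fst q"
    using st p q by (simp add: src_sc_class tgt_sc_class)
  have pq': "left.path_end (fst p') (snd p') = fst q"
    using st p' q by (simp add: src_sc_class tgt_sc_class)
  have v: "valid (fst p, snd p @ snd q)" using valid_path_append[OF p(1) q(1) pq] .
  have v': "valid (fst p', snd p' @ snd q)" using valid_path_append[OF p'(1) q(1) pq'] .
  have e: "fst p = fst p'" "left.braid_eq (snd p @ snd q) (snd p' @ snd q)"
    using eq cmp_sc_class[OF p(1) q(1) pq] cmp_sc_class[OF p'(1) q(1) pq'] p p' q
      sc_class_eq_iff[OF v v']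
    by simp_all
  have "mirror.path_from (left.path_end (fst q) (snd q)) (rev (snd q) @ rev (snd p))"
    using valid_path_mirror[OF v] pq by (simp add: left.path_end_append)
  moreover have "mirror.path_from (left.path_end (fst q) (snd q)) (rev (snd q) @ rev (snd p'))"
    using valid_path_mirror[OF v'] pq' by (simp add: left.path_end_append)
  moreover have "mirror.braid_eq (rev (snd q) @ rev (snd p)) (rev (snd q) @ rev (snd p'))"
    using braid_eq_rev[OF e(2)] by simp
  ultimately have "mirror.braid_eq (rev (snd p)) (rev (snd p'))"
    using mirror.braid_eq_cancel_left by blast
  then have "left.braid_eq (snd p) (snd p')" using mirror_braid_eq_rev by fastforce
  then show "f = f'" using sc_class_eq_iff[OF p(1) p'(1)] p p' e by simp
qed

definition mirror_mset :: "'a list \<Rightarrow> 'a multiset" where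
  "mirror_mset w = mirror.path_mset (rev w)"

lemma mirror_mset_subseteq_of_right_divides:
  assumes pf: "valid pf" and ph: "valid ph" and dvd: "right_divides C (cls pf) (cls ph)"
  shows "mirror_mset (snd pf) \<subseteq># mirror_mset (snd ph)"
proof -
  obtain u where u: "u \<in> mor C" "tgt C u = src C (cls pf)" "cmp C u (cls pf) = cls ph"
    using dvd unfolding right_divides_def by blast
  obtain pu where pu: "valid pu" "u = cls pu" using mor_sc_classE[OF u(1)] .
  have up: "left.path_end (fst pu) (snd pu) = fst pf"
    using u pu pf by (simp add: src_sc_class tgt_sc_class)
  have v: "valid (fst pu, snd pu @ snd pf)" using valid_path_append[OF pu(1) pf up] .
  have "left.braid_eq (snd pu @ snd pf) (snd ph)"
    using u pu cmp_sc_class[OF pu(1) pf up] sc_class_eq_iff[OF v ph] by simp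
  then have "mirror.path_mset (rev (snd ph)) = mirror.path_mset (rev (snd pu @ snd pf))"
    using mirror.path_mset_braid_eq[OF braid_eq_rev] by metis
  then show ?thesis by (simp add: mirror_mset_def mirror.path_mset_append)
qed

lemma right_divides_of_mirror_mset_subseteq:
  assumes pf: "valid pf" and ph: "valid ph"
    and tgt: "left.path_end (fst pf) (snd pf) = left.path_end (fst ph) (snd ph)"
    and sub: "mirror_mset (snd pf) \<subseteq># mirror_mset (snd ph)"
  shows "right_divides C (cls pf) (cls ph)"
proof -
  define y where "y = left.path_end (fst pf) (snd pf)"
  have "mirror.path_from y (rev (snd pf))" "mirror.path_from y (rev (snd ph))"
    using valid_path_mirror[OF pf] valid_path_mirror[OF ph] tgt y_def by simp_all
  then obtain k where k: "mirror.braid_eq (rev (snd ph)) (rev (snd pf) @ k)"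
    using mirror.braid_eq_append_of_path_mset_subseteq sub unfolding mirror_mset_def by blast
  define u where "u = rev k"
  have e: "left.braid_eq (snd ph) (u @ snd pf)" using mirror_braid_eq_rev[OF k] by (simp add: u_def)
  have "left.path_from (fst ph) (u @ snd pf)" "left.path_end (fst ph) (u @ snd pf) = y"
    using left.braid_eq_path_from[OF e] ph valid_path_iff tgt y_def by auto
  then have u_path: "left.path_from (fst ph) u" "left.path_from (left.path_end (fst ph) u) (snd pf)"
    and "left.path_end (left.path_end (fst ph) u) (snd pf) = y"
    by (simp_all add: left.path_from_append left.path_end_append)
  then have u_end: "left.path_end (fst ph) u = fst pf"
    using left.path_from_unique_start pf valid_path_iff y_def by blast
  have vu: "valid (fst ph, u)" using u_path(1) ph valid_path_iff by simp
  have "cmp C (cls (fst ph, u)) (cls pf) = cls (fst ph, u @ snd pf)"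
    using cmp_sc_class[OF vu pf] u_end by simp
  also have "\<dots> = cls ph"
    using sc_class_eq_iff[OF valid_path_append[OF vu pf] ph] u_end e left.braid_eq_sym by simp
  finally show ?thesis
    unfolding right_divides_def
    using sc_class_in_mor[OF vu] sc_class_in_mor[OF pf] sc_class_in_mor[OF ph]
      tgt_sc_class[OF vu] src_sc_class[OF pf] u_end by auto
qed

lemma right_divides_iff_mirror_mset_subseteq:
  assumes "valid pf" "valid ph" "left.path_end (fst pf) (snd pf) = left.path_end (fst ph) (snd ph)"
  shows "right_divides C (cls pf) (cls ph) \<longleftrightarrow> mirror_mset (snd pf) \<subseteq># mirror_mset (snd ph)"
  using assms mirror_mset_subseteq_of_right_divides right_divides_of_mirror_mset_subseteq by blast

text \<open>The left-lcm is the path whose mirror multiset is the union of those of \<open>f\<close> and \<open>g\<close>.\<close>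

lemma left_lcm_exists:
  assumes f: "f \<in> mor C" and g: "g \<in> mor C" and fg: "tgt C f = tgt C g"
  shows "\<exists>h. is_left_lcm C f g h"
proof -
  obtain pf where pf: "valid pf" "f = cls pf" using mor_sc_classE[OF f] .
  obtain pg where pg: "valid pg" "g = cls pg" using mor_sc_classE[OF g] .
  define y where "y = left.path_end (fst pf) (snd pf)"
  have ty: "left.path_end (fst pg) (snd pg) = y" using fg pf pg tgt_sc_class y_def by simp
  define M where "M = mirror_mset (snd pf) \<union># mirror_mset (snd pg)"
  have "set_mset M \<subseteq> arrows_from A t y"
    using mirror.set_path_mset_subset valid_path_mirror[OF pf(1)] valid_path_mirror[OF pg(1)] ty
    by (fastforce simp: M_def mirror_mset_def y_def)
  then obtain w where w: "mirror.path_from y w" "mirror.path_mset w = M"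
    using mirror.path_mset_surj by blast
  define x where "x = mirror.path_end y w"
  have "left.path_from x (rev w) \<and> left.path_end x (rev w) = y"
    using path_from_rev_iff[of x "rev w" y] w x_def by simp
  moreover have "y \<in> Lam" using path_end_in_Lam pf valid_path_iff y_def by blast
  ultimately have vH: "valid (x, rev w)" and tH: "left.path_end x (rev w) = y"
    using path_start_in_Lam valid_path_iff by auto
  have MH: "mirror_mset (rev w) = M" using w by (simp add: mirror_mset_def)
  have "right_divides C f (cls (x, rev w))" "right_divides C g (cls (x, rev w))"
    using right_divides_iff_mirror_mset_subseteq[OF pf(1) vH]
      right_divides_iff_mirror_mset_subseteq[OF pg(1) vH]
      pf pg tH ty y_def MH by (simp_all add: M_def)
  moreover have "right_divides C (cls (x, rev w)) h"
    if h: "h \<in> mor C" "right_divides C f h" "right_divides C g h" for h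
  proof -
    obtain ph where ph: "valid ph" "h = cls ph" using mor_sc_classE[OF h(1)] .
    have th: "left.path_end (fst ph) (snd ph) = y"
      using right_divides_tgt[OF h(2)] ph pf tgt_sc_class y_def by simp
    have "mirror_mset (snd pf) \<subseteq># mirror_mset (snd ph)"
      and "mirror_mset (snd pg) \<subseteq># mirror_mset (snd ph)"
      using mirror_mset_subseteq_of_right_divides pf pg ph h by blast+
    then have "M \<subseteq># mirror_mset (snd ph)" by (simp add: M_def)
    then show ?thesis using right_divides_of_mirror_mset_subseteq[OF vH ph(1)] th tH MH ph by simp
  qed
  ultimately show ?thesis unfolding is_left_lcm_def by blast
qed

lemma left_ore_C: "left_ore C"
  unfolding left_ore_def
proof (intro conjI left_cancellative_C right_cancellative_C ballI impI)
  fix f g assume "f \<in> mor C" "g \<in> mor C" "tgt C f = tgt C g"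
  then obtain h where "is_left_lcm C f g h" using left_lcm_exists by blast
  then show "\<exists>u\<in>mor C. \<exists>v\<in>mor C. tgt C u = src C f \<and> tgt C v = src C g \<and> cmp C u f = cmp C v g"
    unfolding is_left_lcm_def right_divides_def by metis
qed

definition rep_path :: "('v \<times> 'a list) set \<Rightarrow> 'a list" where
  "rep_path f = snd (rep f)"

definition mor_mset :: "('v \<times> 'a list) set \<Rightarrow> 'a multiset" where
  "mor_mset f = left.path_mset (rep_path f)"

definition mor_act :: "('v \<times> 'a list) set \<Rightarrow> 'a \<Rightarrow> 'a" where
  "mor_act f = left.path_act (rep_path f)"

lemma rep_of_mor:
  assumes "f \<in> mor C"
  shows "valid (rep f) \<and> cls (rep f) = f \<and> src C f = fst (rep f) \<and>
    tgt C f = left.path_end (fst (rep f)) (rep_path f)"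
proof -
  obtain p where p: "valid p" "f = cls p" using mor_sc_classE[OF assms] .
  then have r: "valid (rep f)" "cls (rep f) = f" using rep_sc_class sc_class_rep by auto
  then show ?thesis using src_sc_class[OF r(1)] tgt_sc_class[OF r(1)] by (simp add: rep_path_def)
qed

lemma path_from_rep_path: "f \<in> mor C \<Longrightarrow> left.path_from (src C f) (rep_path f)"
  using rep_of_mor valid_path_iff rep_path_def by simp

lemma mor_act_bij:
  "f \<in> mor C \<Longrightarrow> bij_betw (mor_act f) (arrows_from A s (tgt C f)) (arrows_from A s (src C f))"
  using left.path_act_bij[OF path_from_rep_path] rep_of_mor by (simp add: mor_act_def)

lemma set_mor_mset_subset: "f \<in> mor C \<Longrightarrow> set_mset (mor_mset f) \<subseteq> arrows_from A s (src C f)"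
  using left.set_path_mset_subset[OF path_from_rep_path] by (simp add: mor_mset_def)

lemma mor_mset_inj:
  assumes "f \<in> mor C" "g \<in> mor C" "src C f = src C g" "mor_mset f = mor_mset g"
  shows "f = g"
proof -
  have "left.braid_eq (rep_path f) (rep_path g)"
    using left.braid_eq_of_path_mset_eq[OF path_from_rep_path[OF assms(1)], of "rep_path g"]
      path_from_rep_path[OF assms(2)] assms(3,4) by (simp add: mor_mset_def)
  then show ?thesis using sc_class_eq_iff rep_of_mor assms by (metis rep_path_def)
qed

lemma mor_mset_and_act_cmp:
  assumes f: "f \<in> mor C" and g: "g \<in> mor C" and fg: "tgt C f = src C g"
  shows "mor_mset (cmp C f g) = mor_mset f + image_mset (mor_act f) (mor_mset g)"
    and "c \<in> arrows_from A s (tgt C g) \<Longrightarrow> mor_act (cmp C f g) c = mor_act f (mor_act g c)"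
proof -
  have rf: "valid (rep f)" "cls (rep f) = f" "src C f = fst (rep f)"
      "tgt C f = left.path_end (fst (rep f)) (rep_path f)"
    using rep_of_mor[OF f] by auto
  have rg: "valid (rep g)" "cls (rep g) = g" "src C g = fst (rep g)"
      "tgt C g = left.path_end (fst (rep g)) (rep_path g)"
    using rep_of_mor[OF g] by auto
  have pq: "left.path_end (fst (rep f)) (snd (rep f)) = fst (rep g)"
    using rf rg fg by (simp add: rep_path_def)
  have v: "valid (fst (rep f), rep_path f @ rep_path g)"
    using valid_path_append[OF rf(1) rg(1) pq] by (simp add: rep_path_def)
  have "cmp C f g = cls (fst (rep f), rep_path f @ rep_path g)"
    using cmp_sc_class[OF rf(1) rg(1) pq] rf rg by (simp add: rep_path_def)
  then have e: "left.braid_eq (rep_path f @ rep_path g) (rep_path (cmp C f g))"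
    using rep_sc_class[OF v] by (simp add: rep_path_def)
  show "mor_mset (cmp C f g) = mor_mset f + image_mset (mor_act f) (mor_mset g)"
    using left.path_mset_braid_eq[OF e]
    by (simp add: mor_mset_def mor_act_def left.path_mset_append)
  show "mor_act (cmp C f g) c = mor_act f (mor_act g c)" if "c \<in> arrows_from A s (tgt C g)"
    using left.path_act_braid_eq[OF e, of "fst (rep f)" c] v that rg pq
    by (simp add: valid_path_iff mor_act_def left.path_act_append left.path_end_append rep_path_def)
qed

lemma mor_mset_and_act_idm:
  assumes "x \<in> Lam"
  shows "mor_mset (idm C x) = {#}" "mor_act (idm C x) = id"
proof -
  have "valid (x, [])" using assms by (simp add: valid_path_iff)
  then have "rep_path (idm C x) = []"
    using rep_sc_class left.braid_eq_path_from[of "[]" _ x] by (fastforce simp: rep_path_def idm_C)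
  then show "mor_mset (idm C x) = {#}" "mor_act (idm C x) = id"
    by (simp_all add: mor_mset_def mor_act_def)
qed

definition supported :: "'v \<Rightarrow> ('a \<Rightarrow> int) set" where
  "supported v = {n. \<forall>a. a \<notin> arrows_from A s v \<longrightarrow> n a = 0}"

definition affine_fwd :: "('v \<times> 'a list) set \<Rightarrow> ('a \<Rightarrow> int) \<Rightarrow> 'a \<Rightarrow> int" where
  "affine_fwd f n = (\<lambda>a. if a \<in> arrows_from A s (src C f)
       then int (count (mor_mset f) a) + n (inv_into (arrows_from A s (tgt C f)) (mor_act f) a)
         else 0)"

definition affine_bwd :: "('v \<times> 'a list) set \<Rightarrow> ('a \<Rightarrow> int) \<Rightarrow> 'a \<Rightarrow> int" where
  "affine_bwd f n = (\<lambda>b. if b \<in> arrows_from A s (tgt C f)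
       then n (mor_act f b) - int (count (mor_mset f) (mor_act f b)) else 0)"

lemma affine_fwd_bwd:
  assumes f: "f \<in> mor C" and n: "n \<in> supported (src C f)"
  shows "affine_fwd f (affine_bwd f n) = n"
proof
  fix a
  note bij = mor_act_bij[OF f]
  show "affine_fwd f (affine_bwd f n) a = n a"
  proof (cases "a \<in> arrows_from A s (src C f)")
    case True
    define b where "b = inv_into (arrows_from A s (tgt C f)) (mor_act f) a"
    have b: "b \<in> arrows_from A s (tgt C f)" "mor_act f b = a"
      using True bij bij_betwE[OF bij_betw_inv_into[OF bij]] bij_betw_inv_into_right
      unfolding b_def by auto
    show ?thesis using True b by (simp add: affine_fwd_def affine_bwd_def b_def[symmetric])
  next
    case False
    then show ?thesis using n by (simp add: affine_fwd_def supported_def)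
  qed
qed

lemma affine_bwd_fwd:
  assumes f: "f \<in> mor C" and n: "n \<in> supported (tgt C f)"
  shows "affine_bwd f (affine_fwd f n) = n"
proof
  fix b
  note bij = mor_act_bij[OF f]
  show "affine_bwd f (affine_fwd f n) b = n b"
  proof (cases "b \<in> arrows_from A s (tgt C f)")
    case True
    have "mor_act f b \<in> arrows_from A s (src C f)" using True bij bij_betwE by blast
    moreover have "inv_into (arrows_from A s (tgt C f)) (mor_act f) (mor_act f b) = b"
      using True bij bij_betw_def inv_into_f_f by metis
    ultimately show ?thesis using True by (simp add: affine_fwd_def affine_bwd_def)
  next
    case False
    then show ?thesis using n by (simp add: affine_bwd_def supported_def)
  qed
qed

lemma affine_fwd_cmp:
  assumes f: "f \<in> mor C" and g: "g \<in> mor C" and fg: "tgt C f = src C g"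
  shows "affine_fwd f (affine_fwd g n) = affine_fwd (cmp C f g) n"
proof
  fix a
  define X where "X = arrows_from A s (src C f)"
  define Y where "Y = arrows_from A s (tgt C f)"
  define Z where "Z = arrows_from A s (tgt C g)"
  have fgc: "cmp C f g \<in> mor C" "src C (cmp C f g) = src C f" "tgt C (cmp C f g) = tgt C g"
    using cmp_closed[OF f g fg] by auto
  have bf: "bij_betw (mor_act f) Y X" using mor_act_bij[OF f] X_def Y_def by simp
  have bg: "bij_betw (mor_act g) Z Y" using mor_act_bij[OF g] fg Y_def Z_def by simp
  have bfg: "bij_betw (mor_act (cmp C f g)) Z X"
    using mor_act_bij[OF fgc(1)] fgc X_def Z_def by simp
  show "affine_fwd f (affine_fwd g n) a = affine_fwd (cmp C f g) n a"
  proof (cases "a \<in> X")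
    case True
    define b where "b = inv_into Y (mor_act f) a"
    have b: "b \<in> Y" "mor_act f b = a"
      using True bf bij_betwE[OF bij_betw_inv_into[OF bf]] bij_betw_inv_into_right unfolding b_def
      by auto
    define c where "c = inv_into Z (mor_act g) b"
    have c: "c \<in> Z" "mor_act g c = b"
      using b bg bij_betwE[OF bij_betw_inv_into[OF bg]] bij_betw_inv_into_right unfolding c_def
      by auto
    have "inv_into Z (mor_act (cmp C f g)) a = c"
      using inv_into_f_eq[OF bij_betw_imp_inj_on[OF bfg] c(1)] mor_mset_and_act_cmp(2)[OF f g fg]
        c b Z_def
      by simp
    moreover have "count (image_mset (mor_act f) (mor_mset g)) a = count (mor_mset g) b"
      using count_image_mset_inj_on[OF bij_betw_imp_inj_on[OF bf], of "mor_mset g" b]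
        set_mor_mset_subset[OF g] fg b by (simp add: Y_def)
    moreover have "b \<in> arrows_from A s (src C g)" using b fg Y_def by simp
    ultimately show ?thesis using True fgc mor_mset_and_act_cmp(1)[OF f g fg]
      by (simp add: affine_fwd_def X_def[symmetric] Y_def[symmetric] Z_def[symmetric]
          b_def[symmetric] c_def[symmetric])
  next
    case False
    then show ?thesis using fgc by (simp add: affine_fwd_def X_def)
  qed
qed

sublocale category_action C supported affine_fwd affine_bwd
proof
  show "affine_fwd f n \<in> supported (src C f)" if "f \<in> mor C" "n \<in> supported (tgt C f)" for f n
    by (simp add: affine_fwd_def supported_def)
  show "affine_bwd f n \<in> supported (tgt C f)" if "f \<in> mor C" "n \<in> supported (src C f)" for f n
    by (simp add: affine_bwd_def supported_def)
  show "affine_fwd (idm C x) n = n" if "x \<in> ob C" "n \<in> supported x" for x n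
  proof
    fix a
    have "inv_into (arrows_from A s x) id a = a" if "a \<in> arrows_from A s x"
      using that by (metis id_apply inj_on_id inv_into_f_f)
    then show "affine_fwd (idm C x) n a = n a"
      using that mor_mset_and_act_idm idm_closed
      by (auto simp: affine_fwd_def supported_def ob_C)
  qed
qed (simp_all add: affine_fwd_bwd affine_bwd_fwd affine_fwd_cmp)

lemma inj_on_env_iota: "inj_on (env_iota C) (mor C)"
proof (rule inj_onI)
  fix f g assume f: "f \<in> mor C" and g: "g \<in> mor C" and eq: "env_iota C f = env_iota C g"
  have fg: "src C g = src C f" "tgt C g = tgt C f"
    and act: "affine_fwd f (\<lambda>_. 0) = affine_fwd g (\<lambda>_. 0)"
    using env_iota_eq_imp_act_fwd_eq[OF f g eq] by (auto simp: supported_def)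
  have "count (mor_mset f) a = count (mor_mset g) a" for a
  proof (cases "a \<in> arrows_from A s (src C f)")
    case True
    then show ?thesis using fun_cong[OF act, of a] fg by (simp add: affine_fwd_def)
  next
    case False
    then have "a \<notin># mor_mset f" "a \<notin># mor_mset g"
      using set_mor_mset_subset[OF f] set_mor_mset_subset[OF g] fg by auto
    then show ?thesis by (simp add: not_in_iff)
  qed
  then show "f = g" using mor_mset_inj f g fg multiset_eqI by metis
qed

end

theorem proposition5p8:
  fixes Lam :: "'v set" and A :: "'a set" and s t :: "'a \<Rightarrow> 'v"
    and \<sigma> :: "'a \<times> 'a \<Rightarrow> 'a \<times> 'a"
  defines "C \<equiv> structure_category Lam A s t \<sigma>"
  assumes "yang_baxter_map Lam A s t \<sigma>"
    and "involutive_qmap A s t \<sigma>"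
    and "nondegenerate A s t \<sigma>"
  shows "left_ore C
    \<and> (\<forall>f\<in>mor C. \<forall>g\<in>mor C. tgt C f = tgt C g \<longrightarrow> (\<exists>h. is_left_lcm C f g h))
    \<and> inj_on (env_iota C) (mor C)
    \<and> (\<forall>S. garside_family C S \<longrightarrow>
         (\<forall>f\<in>mor C. \<forall>g\<in>mor C. tgt C f = tgt C g \<longrightarrow>
            has_sym_normal_decomp C S (env_class C (src C f, [(f, True), (g, False)]))))"
proof -
  interpret involutive_nondegenerate_ybm Lam A s t \<sigma>
    using assms(2-4) by unfold_locales
  have "has_sym_normal_decomp C S (env_class C (src C f, [(f, True), (g, False)]))"
    if S: "garside_family C S" and fg: "f \<in> mor C" "g \<in> mor C" "tgt C f = tgt C g" for S f g
  proof -
    obtain h where "is_left_lcm C f g h" using left_lcm_exists fg unfolding C_def by blast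
    then show ?thesis
      using sym_normal_decomp_of_left_lcm left_cancellative_C right_cancellative_C S fg
      unfolding C_def by blast
  qed
  then show ?thesis
    using left_ore_C left_lcm_exists inj_on_env_iota unfolding C_def by blast
qed

end
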